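(* Let $m\ge1$, $\mathbf n=(n_1,\dots,n_m)$ nonnegative integers, $\mathbf c=(c_1,\dots,c_m)\in\mathbb C^m$, $a_1,\dots,a_m\in\mathbb C$, and let $f(z_1,\dots,z_m)\in W_{\mathbf c}^{\mathbf n}$. Then (for parameter values at which all denominators are nonzero) \begin{gather*} \prod_{i=1}^m \frac{\big(a_i ^2 q, q, c_i z_i , c_i/z_i;q,p\big)_{n_i}}{(a_i c_i,c_i/a_i, a_i qz_i, a_iq/z_i;q,p)_{n_i}} f(z_1,\dots, z_m)\\ =\sum_{k_1=0}^{n_1}\cdots\sum_{k_m=0}^{n_m}\prod_{i=1}^m q^{k_i}\frac{\theta\big(a_i^2 q^{2k_i};p\big)}{\theta\big(a_i^2;p\big)} \frac{\big(q^{-n_i},a_i ^2, a_i q/c_i, a_i c_i q^{n_i}, a_i z_i ,a_i/z_i;q,p\big)_{k_i}}{\big(q,a_i^2 q^{n_i+1}, a_i c_i, a_i q^{1-n_i}/c_i , a_i q z_i,a_i q/z_i;q,p\big)_{k_i}}\; f\big(a_1 q^{k_1},\dots, a_m q^{k_m}\big). \end{gather*}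
   Context: Fix complex numbers $q,p$ with $0<|q|<1$, $|p|<1$. The modified Jacobi theta function is $\theta(x;p)=\prod_{j\ge0}(1-p^jx)(1-p^{j+1}/x)$ for $x\neq0$, and $\theta(x_1,\dots,x_r;p)=\prod_i\theta(x_i;p)$. The theta shifted factorial is $(a;q,p)_n=\prod_{k=0}^{n-1}\theta(aq^k;p)$ for $n\ge1$, $(a;q,p)_0=1$, and $(a_1,\dots,a_r;q,p)_n=\prod_i(a_i;q,p)_n$. The space $W_{\mathbf c}^{\mathbf n}$ is the complex span of all functions $g_{\mathbf k}(z_1,\dots,z_m)/\prod_{i=1}^m(c_iz_i,c_i/z_i;q,p)_{k_i}$ with $0\le k_i\le n_i$, where $g_{\mathbf k}$ ranges over functions holomorphic in $z_1,\dots,z_m\neq0$, invariant under $z_i\mapsto 1/z_i$ for each $i$, and satisfying $g_{\mathbf k}(z_1,\dots,pz_i,\dots,z_m)=p^{-k_i}z_i^{-2k_i}g_{\mathbf k}(z_1,\dots,z_m)$ for each $i$. *)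

theory Defs
  imports "HOL-Analysis.Analysis"
begin

definition theta :: "complex \<Rightarrow> complex \<Rightarrow> complex" where
  "theta x p = (\<Prod>j. (1 - p ^ j * x) * (1 - p ^ Suc j / x))"

definition tpoch :: "complex \<Rightarrow> complex \<Rightarrow> complex \<Rightarrow> nat \<Rightarrow> complex" where
  "tpoch a q p n = (\<Prod>k<n. theta (a * q ^ k) p)"

text \<open>Admissible numerators g_k: functions of the m variables z_0..z_(m-1)
  (points are maps nat => complex; coordinates >= m are ignored), holomorphic
  in each variable on the punctured plane, invariant under z_i -> 1/z_i, and
  quasi-periodic under z_i -> p z_i with multiplier p^(-k_i) z_i^(-2 k_i).\<close>
definition Wgen :: "nat \<Rightarrow> complex \<Rightarrow> (nat \<Rightarrow> nat) \<Rightarrow> ((nat \<Rightarrow> complex) \<Rightarrow> complex) \<Rightarrow> bool" where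
  "Wgen m p k g \<longleftrightarrow>
     (\<forall>z z'. (\<forall>i<m. z i = z' i) \<longrightarrow> g z = g z') \<and>
     (\<forall>z. (\<forall>j<m. z j \<noteq> 0) \<longrightarrow> (\<forall>i<m.
        (\<lambda>w. g (z(i := w))) holomorphic_on (- {0}) \<and>
        g (z(i := 1 / z i)) = g z \<and>
        g (z(i := p * z i)) = p powi (- int (k i)) * z i powi (- 2 * int (k i)) * g z))"

inductive_set Wspace :: "nat \<Rightarrow> complex \<Rightarrow> complex \<Rightarrow> (nat \<Rightarrow> complex) \<Rightarrow> (nat \<Rightarrow> nat)
    \<Rightarrow> ((nat \<Rightarrow> complex) \<Rightarrow> complex) set"
  for m q p c n where
  gen: "\<lbrakk>\<forall>i<m. k i \<le> n i; Wgen m p k g\<rbrakk> \<Longrightarrow>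
        (\<lambda>z. g z / (\<Prod>i<m. tpoch (c i * z i) q p (k i) * tpoch (c i / z i) q p (k i)))
          \<in> Wspace m q p c n"
| zero: "(\<lambda>z. 0) \<in> Wspace m q p c n"
| add: "\<lbrakk>f \<in> Wspace m q p c n; h \<in> Wspace m q p c n\<rbrakk> \<Longrightarrow> (\<lambda>z. f z + h z) \<in> Wspace m q p c n"
| smult: "f \<in> Wspace m q p c n \<Longrightarrow> (\<lambda>z. s * f z) \<in> Wspace m q p c n"

end

theory Submission
  imports Defs "HOL-Complex_Analysis.Complex_Analysis"
begin

text \<open>The identity is proved one variable at a time. Along the \<open>i\<close>-th coordinate an element of
  \<open>W_c^n\<close> is \<open>G(w) / (c_i w, c_i/w; q,p)_{n_i}\<close>, where \<open>G\<close> is holomorphic on \<open>\<complex> - {0}\<close>, invariant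
  under \<open>w \<mapsto> 1/w\<close> and satisfies \<open>G(p w) (p w^2)^{n_i} = G(w)\<close>. Such a symmetric theta function of
  degree \<open>n\<close> vanishing at \<open>n+1\<close> separated points vanishes identically: dividing it by a
  product of \<open>n\<close> theta functions with simple zeros at all but one of these points gives a
  \<open>p\<close>-periodic function without poles, which is constant by Liouville's theorem and vanishes
  at the remaining point. Hence \<open>G\<close> equals its Lagrange interpolant at the nodes \<open>a q^k\<close>,
  \<open>0 \<le> k \<le> n\<close>, and evaluating the interpolation basis at the nodes with elementary identities
  for theta shifted factorials turns the interpolant into the stated very-well-poised sum. The
  nodes are separated only for generic \<open>a\<close>; the general case follows by continuity in \<open>a\<close>,
  the exceptional values forming a countable set.\<close>

section \<open>The theta function\<close>

definition qpoch_inf :: "complex \<Rightarrow> complex \<Rightarrow> complex" where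
  "qpoch_inf u p = (\<Prod>j. 1 - u * p ^ j)"

lemma qpoch_inf_has_prod:
  assumes "norm p < 1"
  shows "(\<lambda>j. 1 - u * p ^ j) has_prod qpoch_inf u p"
proof -
  have "summable (\<lambda>j. norm u * norm p ^ j)"
    using assms by (intro summable_mult summable_geometric) auto
  hence "summable (\<lambda>j. norm ((1 - u * p ^ j) - 1))"
    by (simp add: norm_mult norm_power)
  hence "convergent_prod (\<lambda>j. 1 - u * p ^ j)"
    by (intro abs_convergent_prod_imp_convergent_prod summable_imp_abs_convergent_prod)
  thus ?thesis
    unfolding qpoch_inf_def by (simp add: convergent_prod_has_prod_iff[symmetric])
qed

lemma qpoch_inf_eq_0_iff:
  assumes "norm p < 1"
  shows "qpoch_inf u p = 0 \<longleftrightarrow> (\<exists>j. u * p ^ j = 1)"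
  unfolding has_prod_eq_0_iff[OF qpoch_inf_has_prod[OF assms]] image_iff by auto

lemma qpoch_inf_unfold:
  assumes "norm p < 1"
  shows "qpoch_inf u p = (1 - u) * qpoch_inf (u * p) p"
proof -
  have "(\<lambda>j. 1 - u * p ^ Suc j) has_prod qpoch_inf (u * p) p"
    using qpoch_inf_has_prod[OF assms, of "u * p"] by (simp add: mult_ac)
  from has_prod_Suc_imp[OF this] show ?thesis
    using has_prod_unique2[OF qpoch_inf_has_prod[OF assms]] by (simp add: mult.commute)
qed

lemma qpoch_inf_holomorphic_on_ball:
  assumes p: "norm p < 1"
  shows "(\<lambda>u. qpoch_inf u p) holomorphic_on ball 0 R"
proof -
  have cont: "continuous_on (cball 0 R) (\<lambda>u. 1 - u * p ^ n)" for n
    by (intro continuous_intros)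
  have "uniformly_convergent_on (cball 0 R) (\<lambda>N u. \<Sum>n<N. norm ((1 - u * p ^ n) - 1))"
  proof (rule Weierstrass_m_test')
    show "summable (\<lambda>n. R * norm p ^ n)"
      using p by (intro summable_mult summable_geometric) auto
    fix n and u :: complex assume "u \<in> cball 0 R"
    hence "norm u \<le> R" by simp
    thus "norm (norm ((1 - u * p ^ n) - 1)) \<le> R * norm p ^ n"
      by (simp add: norm_mult norm_power mult_right_mono)
  qed
  hence "uniformly_convergent_on (cball 0 R) (\<lambda>N u. \<Prod>n<N. 1 - u * p ^ n)"
    by (intro uniformly_convergent_on_prod' cont compact_cball)
  then obtain g where g: "uniform_limit (cball 0 R) (\<lambda>N u. \<Prod>n<N. 1 - u * p ^ n) g sequentially"
    unfolding uniformly_convergent_on_def by blast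
  have "g u = qpoch_inf u p" if "u \<in> cball 0 R" for u
    using tendsto_uniform_limitI[OF g that] has_prod_imp_tendsto'[OF qpoch_inf_has_prod[OF p]]
    by (rule LIMSEQ_unique)
  hence lim: "uniform_limit (cball 0 R) (\<lambda>N u. \<Prod>n<N. 1 - u * p ^ n) (\<lambda>u. qpoch_inf u p) sequentially"
    using g by (subst (asm) uniform_limit_cong') auto
  have "\<forall>\<^sub>F N in sequentially. continuous_on (cball 0 R) (\<lambda>u. \<Prod>n<N. 1 - u * p ^ n)
      \<and> (\<lambda>u. \<Prod>n<N. 1 - u * p ^ n) holomorphic_on ball 0 R"
    by (intro always_eventually allI conjI continuous_intros holomorphic_intros)
  from holomorphic_uniform_limit[OF this lim] show ?thesis by simp
qed

lemma qpoch_inf_holomorphic: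
  assumes "norm p < 1"
  shows "(\<lambda>u. qpoch_inf u p) holomorphic_on UNIV"
proof -
  have "(\<lambda>u. qpoch_inf u p) analytic_on UNIV"
    unfolding analytic_on_def
  proof
    fix z :: complex
    have "ball z 1 \<subseteq> ball 0 (norm z + 1)"
      by (simp add: ball_subset_ball_iff)
    hence "(\<lambda>u. qpoch_inf u p) holomorphic_on ball z 1"
      by (rule holomorphic_on_subset[OF qpoch_inf_holomorphic_on_ball[OF assms]])
    thus "\<exists>r>0. (\<lambda>u. qpoch_inf u p) holomorphic_on ball z r"
      by (intro exI[of _ 1]) auto
  qed
  thus ?thesis by (rule analytic_imp_holomorphic)
qed

lemma holomorphic_on_qpoch_inf [holomorphic_intros]:
  assumes "norm p < 1" "f holomorphic_on S"
  shows "(\<lambda>z. qpoch_inf (f z) p) holomorphic_on S"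
  using holomorphic_on_compose[OF assms(2) holomorphic_on_subset[OF qpoch_inf_holomorphic[OF assms(1)]]]
  by (simp add: o_def)

lemma isCont_qpoch_inf:
  assumes "norm p < 1"
  shows "isCont (\<lambda>u. qpoch_inf u p) u"
  using holomorphic_on_imp_continuous_on[OF qpoch_inf_holomorphic[OF assms]]
  by (simp add: continuous_on_eq_continuous_at)

lemma tendsto_qpoch_inf [tendsto_intros]:
  assumes "norm p < 1" "(f \<longlongrightarrow> l) F"
  shows "((\<lambda>x. qpoch_inf (f x) p) \<longlongrightarrow> qpoch_inf l p) F"
  using isCont_tendsto_compose[OF isCont_qpoch_inf[OF assms(1)] assms(2)] .

lemma theta_eq_qpoch_inf:
  assumes "norm p < 1"
  shows "theta x p = qpoch_inf x p * qpoch_inf (p / x) p"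
proof -
  have "(\<lambda>j. (1 - x * p ^ j) * (1 - p / x * p ^ j)) has_prod (qpoch_inf x p * qpoch_inf (p / x) p)"
    by (intro has_prod_mult qpoch_inf_has_prod assms)
  moreover have "(\<lambda>j. (1 - x * p ^ j) * (1 - p / x * p ^ j)) = (\<lambda>j. (1 - p ^ j * x) * (1 - p ^ Suc j / x))"
    by (simp add: mult_ac)
  ultimately show ?thesis
    unfolding theta_def by (simp add: has_prod_iff)
qed

lemma theta_p_mult:
  assumes "norm p < 1" "p \<noteq> 0"
  shows "theta (p * x) p = theta (1 / x) p"
  using assms by (simp add: theta_eq_qpoch_inf mult.commute)

lemma theta_factor:
  assumes "norm p < 1"
  shows "theta x p = (1 - x) * (qpoch_inf (x * p) p * qpoch_inf (p / x) p)"
  using assms by (simp add: theta_eq_qpoch_inf qpoch_inf_unfold[of p x])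

lemma theta_inverse:
  assumes "norm p < 1" "x \<noteq> 0"
  shows "theta (1 / x) p = - theta x p / x"
proof -
  define T where "T = qpoch_inf (x * p) p * qpoch_inf (p / x) p"
  have "theta (1 / x) p = (1 - 1 / x) * T"
    using theta_factor[OF assms(1), of "1 / x"] unfolding T_def by (simp add: mult.commute)
  also have "\<dots> = - ((1 - x) * T) / x"
    using assms(2) by (simp add: field_simps)
  also have "(1 - x) * T = theta x p"
    using theta_factor[OF assms(1), of x] unfolding T_def by simp
  finally show ?thesis .
qed

lemma theta_one:
  assumes "norm p < 1"
  shows "theta 1 p = 0"
  using theta_factor[OF assms] by simp

lemma qpoch_inf_p_nonzero:
  assumes "norm p < 1"
  shows "qpoch_inf p p \<noteq> 0"
proof
  assume "qpoch_inf p p = 0"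
  then obtain j where "p ^ Suc j = 1"
    using qpoch_inf_eq_0_iff[OF assms] by (auto simp: mult.commute)
  hence "norm p ^ Suc j = 1" by (metis norm_one norm_power)
  moreover have "norm p ^ Suc j < 1"
    using assms by (subst power_less_one_iff) auto
  ultimately show False by simp
qed

lemma theta_eq_0_imp:
  assumes "norm p < 1" "p \<noteq> 0" "x \<noteq> 0" "theta x p = 0"
  shows "\<exists>k::int. x = p powi k"
proof -
  have "qpoch_inf x p = 0 \<or> qpoch_inf (p / x) p = 0"
    using assms(4) unfolding theta_eq_qpoch_inf[OF assms(1)] by simp
  then consider j where "x * p ^ j = 1" | j where "p / x * p ^ j = 1"
    unfolding qpoch_inf_eq_0_iff[OF assms(1)] by blast
  thus ?thesis
  proof cases
    case (1 j)
    hence "x = p powi (- int j)"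
      using assms(2) by (simp add: power_int_minus field_simps)
    thus ?thesis by blast
  next
    case (2 j)
    hence "x = p ^ Suc j"
      using assms(3) by (simp add: field_simps)
    hence "x = p powi int (Suc j)"
      by (simp only: power_int_of_nat)
    thus ?thesis by blast
  qed
qed

lemma holomorphic_on_theta [holomorphic_intros]:
  assumes "norm p < 1" "f holomorphic_on S" "\<And>z. z \<in> S \<Longrightarrow> f z \<noteq> 0"
  shows "(\<lambda>z. theta (f z) p) holomorphic_on S"
  unfolding theta_eq_qpoch_inf[OF assms(1)] using assms by (intro holomorphic_intros) auto

lemma tendsto_theta [tendsto_intros]:
  assumes "norm p < 1" "(f \<longlongrightarrow> l) F" "l \<noteq> 0"
  shows "((\<lambda>x. theta (f x) p) \<longlongrightarrow> theta l p) F"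
  unfolding theta_eq_qpoch_inf[OF assms(1)] using assms by (intro tendsto_intros) auto

section \<open>Holomorphic functions on \<open>\<complex>\<^sup>*\<close> that are invariant under \<open>z \<mapsto> p z\<close>\<close>

lemma periodic_power_int:
  fixes p z :: complex
  assumes "p \<noteq> 0" "\<And>z. z \<noteq> 0 \<Longrightarrow> E (p * z) = E z" "z \<noteq> 0"
  shows "E (p powi k * z) = E z"
proof -
  have nat: "E (p ^ n * w) = E w" if "w \<noteq> 0" for n w
    using that assms(1,2) by (induction n) (auto simp: mult.assoc)
  show ?thesis
  proof (cases "k \<ge> 0")
    case True
    then obtain n where "k = int n" by (metis nonneg_eq_int)
    thus ?thesis using nat[OF assms(3)] by simp
  next
    case False
    then obtain n where k: "k = - int n" by (metis nonneg_eq_int neg_0_le_iff_le minus_minus le_cases)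
    have "E (p ^ n * (z / p ^ n)) = E (z / p ^ n)"
      using assms by (intro nat) auto
    moreover have "p powi k * z = z / p ^ n"
      by (simp add: k power_int_minus divide_inverse mult.commute)
    ultimately show ?thesis
      using assms(1) by simp
  qed
qed

lemma power_int_shift_into_annulus:
  fixes p z :: complex
  assumes "norm p < 1" "p \<noteq> 0" "z \<noteq> 0"
  shows "\<exists>k::int. norm p \<le> norm (p powi k * z) \<and> norm (p powi k * z) \<le> 1"
proof -
  define L where "L = - ln (norm p)"
  have L: "L > 0" using assms unfolding L_def by simp
  define k where "k = ceiling (ln (norm z) / L)"
  have k1: "ln (norm z) / L \<le> k" and k2: "k < ln (norm z) / L + 1"
    unfolding k_def by linarith+
  have n: "norm (p powi k * z) = exp (ln (norm z) - of_int k * L)"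
  proof -
    have "norm (p powi k) = exp (- (of_int k * L))"
      using assms(2) by (simp add: norm_power_int powr_real_of_int'[symmetric] powr_def L_def)
    thus ?thesis
      using assms(3) by (simp add: norm_mult exp_diff exp_minus field_simps)
  qed
  have "ln (norm z) - of_int k * L \<le> 0"
    using k1 L by (simp add: divide_le_eq mult.commute)
  hence "norm (p powi k * z) \<le> 1"
    unfolding n by simp
  moreover have "- L < ln (norm z) - of_int k * L"
    using k2 L by (simp add: less_divide_eq field_simps)
  hence "exp (- L) \<le> norm (p powi k * z)"
    unfolding n by simp
  moreover have "exp (- L) = norm p"
    using assms(2) unfolding L_def by simp
  ultimately show ?thesis
    by auto
qed

text \<open>Such a function is bounded, since its values are those on the compact annulus
  \<open>\<bar>p\<bar> \<le> \<bar>z\<bar> \<le> 1\<close>; hence \<open>E \<circ> exp\<close> is constant by Liouville's theorem.\<close>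
lemma holomorphic_p_invariant_const:
  assumes p: "norm p < 1" "p \<noteq> 0" and hol: "E holomorphic_on - {0}"
    and per: "\<And>z. z \<noteq> 0 \<Longrightarrow> E (p * z) = E z"
  shows "\<exists>C. \<forall>z. z \<noteq> 0 \<longrightarrow> E z = C"
proof -
  define K where "K = {z::complex. norm p \<le> norm z \<and> norm z \<le> 1}"
  have "K = cball 0 1 - ball 0 (norm p)" unfolding K_def by auto
  hence "compact K" by (simp add: compact_diff)
  moreover have "K \<subseteq> - {0}"
    unfolding K_def using p by auto
  hence "continuous_on K E"
    by (rule continuous_on_subset[OF holomorphic_on_imp_continuous_on[OF hol]])
  ultimately have "compact (E ` K)"
    by (rule compact_continuous_image[rotated])
  then obtain B where B: "\<And>z. z \<in> K \<Longrightarrow> norm (E z) \<le> B"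
    using compact_imp_bounded bounded_iff by (metis imageI)
  have bound: "norm (E z) \<le> B" if z: "z \<noteq> 0" for z
  proof -
    obtain k :: int where "p powi k * z \<in> K"
      using power_int_shift_into_annulus[OF p z] unfolding K_def by blast
    hence "norm (E (p powi k * z)) \<le> B" by (rule B)
    thus ?thesis using periodic_power_int[of p E z k, OF p(2) per z] by simp
  qed
  hence "bounded (range (\<lambda>w. E (exp w)))"
    unfolding bounded_iff using bound exp_not_eq_zero by blast
  moreover have "(\<lambda>w. E (exp w)) holomorphic_on UNIV"
    by (rule holomorphic_on_compose_gen[OF holomorphic_on_exp hol, unfolded o_def]) auto
  ultimately obtain C where C: "\<And>w. E (exp w) = C"
    using Liouville_theorem unfolding constant_on_def by blast
  show ?thesis
  proof (intro exI allI impI)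
    fix z :: complex assume "z \<noteq> 0"
    thus "E z = C" using C[of "Ln z"] by simp
  qed
qed

section \<open>Symmetric theta functions of degree \<open>n\<close>\<close>

definition sym_theta_fun :: "complex \<Rightarrow> nat \<Rightarrow> (complex \<Rightarrow> complex) \<Rightarrow> bool" where
  "sym_theta_fun p n G \<longleftrightarrow> G holomorphic_on - {0} \<and> (\<forall>w. w \<noteq> 0 \<longrightarrow> G (1 / w) = G w)
     \<and> (\<forall>w. w \<noteq> 0 \<longrightarrow> G (p * w) * (p * w ^ 2) ^ n = G w)"

lemma sym_theta_fun_add: "sym_theta_fun p n F \<Longrightarrow> sym_theta_fun p n G \<Longrightarrow> sym_theta_fun p n (\<lambda>w. F w + G w)"
  unfolding sym_theta_fun_def by (auto intro: holomorphic_intros simp: distrib_right)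

lemma sym_theta_fun_diff: "sym_theta_fun p n F \<Longrightarrow> sym_theta_fun p n G \<Longrightarrow> sym_theta_fun p n (\<lambda>w. F w - G w)"
  unfolding sym_theta_fun_def by (auto intro: holomorphic_intros simp: left_diff_distrib)

lemma sym_theta_fun_cmult: "sym_theta_fun p n F \<Longrightarrow> sym_theta_fun p n (\<lambda>w. s * F w)"
  unfolding sym_theta_fun_def by (auto intro: holomorphic_intros simp: mult.assoc)

lemma sym_theta_fun_zero: "sym_theta_fun p n (\<lambda>w. 0)"
  unfolding sym_theta_fun_def by auto

lemma sym_theta_fun_sum:
  "finite I \<Longrightarrow> (\<And>i. i \<in> I \<Longrightarrow> sym_theta_fun p n (F i)) \<Longrightarrow> sym_theta_fun p n (\<lambda>w. \<Sum>i\<in>I. F i w)"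
  by (induction I rule: finite_induct) (auto intro: sym_theta_fun_zero sym_theta_fun_add)

lemma sym_theta_fun_mult:
  assumes "sym_theta_fun p k F" "sym_theta_fun p l G"
  shows "sym_theta_fun p (k + l) (\<lambda>w. F w * G w)"
  unfolding sym_theta_fun_def
proof (intro conjI allI impI)
  show "(\<lambda>w. F w * G w) holomorphic_on - {0}"
    using assms unfolding sym_theta_fun_def by (intro holomorphic_intros) auto
  fix w :: complex assume w: "w \<noteq> 0"
  show "F (1 / w) * G (1 / w) = F w * G w"
    using assms w unfolding sym_theta_fun_def by simp
  have "F (p * w) * G (p * w) * (p * w\<^sup>2) ^ (k + l)
      = (F (p * w) * (p * w\<^sup>2) ^ k) * (G (p * w) * (p * w\<^sup>2) ^ l)"
    by (simp add: power_add mult_ac)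
  also have "\<dots> = F w * G w"
    using assms w unfolding sym_theta_fun_def by simp
  finally show "F (p * w) * G (p * w) * (p * w\<^sup>2) ^ (k + l) = F w * G w" .
qed

lemma sym_theta_fun_quotient_invariant:
  assumes "sym_theta_fun p n H" "sym_theta_fun p n D" "p \<noteq> 0" "w \<noteq> 0"
  shows "H (p * w) / D (p * w) = H w / D w" "H (1 / w) / D (1 / w) = H w / D w"
proof -
  have c: "(p * w ^ 2) ^ n \<noteq> 0" using assms(3,4) by simp
  have "H (p * w) = H w / (p * w ^ 2) ^ n" "D (p * w) = D w / (p * w ^ 2) ^ n"
    using assms c unfolding sym_theta_fun_def by (auto simp: field_simps)
  thus "H (p * w) / D (p * w) = H w / D w"
    using c by simp
  show "H (1 / w) / D (1 / w) = H w / D w"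
    using assms unfolding sym_theta_fun_def by simp
qed

definition theta_pm :: "complex \<Rightarrow> complex \<Rightarrow> complex \<Rightarrow> complex" where
  "theta_pm x z p = theta (x * z) p * theta (x / z) p"

lemma theta_pm_inverse: "theta_pm x (1 / z) p = theta_pm x z p"
  unfolding theta_pm_def by (simp add: mult.commute)

lemma theta_pm_p_mult:
  assumes p: "norm p < 1" "p \<noteq> 0" and x: "x \<noteq> 0" and z: "z \<noteq> 0"
  shows "theta_pm x (p * z) p * (p * z ^ 2) = theta_pm x z p"
proof -
  have a: "theta (p * (x * z)) p = - theta (x * z) p / (x * z)"
    using theta_p_mult[OF p, of "x * z"] theta_inverse[OF p(1), of "x * z"] x z by simp
  have "theta (x / (p * z)) p = - theta (p * (z / x)) p / (p * z / x)"
    using theta_inverse[OF p(1), of "p * z / x"] p x z by simp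
  also have "theta (p * (z / x)) p = theta (x / z) p"
    using theta_p_mult[OF p, of "z / x"] by simp
  finally have b: "theta (x / (p * z)) p = - theta (x / z) p * x / (p * z)"
    using x by (simp add: field_simps)
  have "theta_pm x (p * z) p = theta (p * (x * z)) p * theta (x / (p * z)) p"
    unfolding theta_pm_def by (simp add: mult_ac)
  thus ?thesis
    unfolding a b theta_pm_def using x z p(2) by (simp add: field_simps power2_eq_square)
qed

lemma holomorphic_on_theta_pm [holomorphic_intros]:
  assumes "norm p < 1" "x \<noteq> 0" "f holomorphic_on S" "\<And>z. z \<in> S \<Longrightarrow> f z \<noteq> 0"
  shows "(\<lambda>z. theta_pm x (f z) p) holomorphic_on S"
  unfolding theta_pm_def using assms by (intro holomorphic_intros) auto

lemma sym_theta_fun_prod_theta_pm: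
  assumes p: "norm p < 1" "p \<noteq> 0" and "finite I" and x: "\<And>i. i \<in> I \<Longrightarrow> x i \<noteq> 0"
  shows "sym_theta_fun p (card I) (\<lambda>z. \<Prod>i\<in>I. theta_pm (x i) z p)"
  unfolding sym_theta_fun_def
proof (intro conjI allI impI)
  show "(\<lambda>z. \<Prod>i\<in>I. theta_pm (x i) z p) holomorphic_on - {0}"
    using p x by (intro holomorphic_intros) auto
  fix w :: complex assume w: "w \<noteq> 0"
  show "(\<Prod>i\<in>I. theta_pm (x i) (1 / w) p) = (\<Prod>i\<in>I. theta_pm (x i) w p)"
    by (simp add: theta_pm_inverse)
  have "(\<Prod>i\<in>I. theta_pm (x i) (p * w) p) * (p * w ^ 2) ^ card I
      = (\<Prod>i\<in>I. theta_pm (x i) (p * w) p * (p * w ^ 2))"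
    by (simp add: prod.distrib)
  also have "\<dots> = (\<Prod>i\<in>I. theta_pm (x i) w p)"
    using theta_pm_p_mult[OF p x w] by simp
  finally show "(\<Prod>i\<in>I. theta_pm (x i) (p * w) p) * (p * w ^ 2) ^ card I = (\<Prod>i\<in>I. theta_pm (x i) w p)" .
qed

lemma theta_pm_eq_0_imp:
  assumes p: "norm p < 1" "p \<noteq> 0" and "x \<noteq> 0" "w \<noteq> 0" "theta_pm x w p = 0"
  obtains k :: int where "w = p powi k * (1 / x)" | k :: int where "w = 1 / (p powi k * (1 / x))"
proof -
  consider "theta (x * w) p = 0" | "theta (x / w) p = 0"
    using assms(5) unfolding theta_pm_def by auto
  thus ?thesis
  proof cases
    case 1
    then obtain k where "x * w = p powi k"
      using theta_eq_0_imp[OF p] assms(3,4) by force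
    hence "w = p powi k * (1 / x)" using assms(3) by (simp add: field_simps)
    thus ?thesis by (rule that(1))
  next
    case 2
    then obtain k where "x / w = p powi k"
      using theta_eq_0_imp[OF p] assms(3,4) by force
    hence "w = 1 / (p powi k * (1 / x))" using assms(3,4) by (simp add: field_simps)
    thus ?thesis by (rule that(2))
  qed
qed

lemma theta_pm_factor:
  assumes "norm p < 1" "x \<noteq> 0"
  shows "theta_pm x w p = (w - 1 / x) * (- x * qpoch_inf (x * w * p) p * qpoch_inf (p / (x * w)) p * theta (x / w) p)"
  unfolding theta_pm_def theta_factor[OF assms(1), of "x * w"] using assms(2) by (simp add: field_simps)

section \<open>Uniqueness and interpolation of symmetric theta functions\<close>

lemma isCont_holomorphic_punctured:
  assumes "f holomorphic_on - {0}" "w \<noteq> 0"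
  shows "isCont f w"
proof -
  have "open (- {0::complex})" by auto
  hence "\<forall>x\<in>- {0}. isCont f x"
    using holomorphic_on_imp_continuous_on[OF assms(1)] by (simp add: continuous_on_eq_continuous_at)
  thus ?thesis using assms(2) by simp
qed

lemma tendsto_at_transfer:
  assumes "filterlim g (at a) (at b)" "\<forall>\<^sub>F w in at b. \<Phi> (g w) = \<Phi> w" "(\<Phi> \<longlongrightarrow> c) (at a)"
  shows "(\<Phi> \<longlongrightarrow> c) (at b)"
  using Lim_transform_eventually[OF filterlim_compose[OF assms(3,1)] assms(2)] .

lemma filterlim_cmult_at:
  fixes u b :: complex
  assumes "u \<noteq> 0"
  shows "filterlim (\<lambda>w. u * w) (at (u * b)) (at b)"
proof -
  have "\<forall>\<^sub>F w in at b. u * w \<in> UNIV \<and> u * w \<noteq> u * b"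
    using eventually_neq_at_within[of b b UNIV] by eventually_elim (use assms in auto)
  moreover have "((\<lambda>w. u * w) \<longlongrightarrow> u * b) (at b)"
    by (intro tendsto_intros)
  ultimately show ?thesis
    by (simp add: filterlim_at)
qed

lemma filterlim_inverse_at:
  fixes b :: complex
  assumes "b \<noteq> 0"
  shows "filterlim (\<lambda>w. 1 / w) (at (1 / b)) (at b)"
proof -
  have "\<forall>\<^sub>F w in at b. 1 / w \<in> UNIV \<and> 1 / w \<noteq> 1 / b"
    using eventually_neq_at_within[of b b UNIV] by eventually_elim auto
  moreover have "((\<lambda>w. 1 / w) \<longlongrightarrow> 1 / b) (at b)"
    using assms by (intro tendsto_intros)
  ultimately show ?thesis
    by (simp add: filterlim_at)
qed

lemma eventually_nonzero_at:
  fixes a :: complex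
  assumes "a \<noteq> 0"
  shows "\<forall>\<^sub>F w in at a. w \<noteq> 0"
  using tendsto_imp_eventually_ne[OF tendsto_ident_at assms] .

lemma tendsto_at_power_int_shift:
  fixes \<Phi> :: "complex \<Rightarrow> complex"
  assumes p: "p \<noteq> 0" and per: "\<And>w. w \<noteq> 0 \<Longrightarrow> \<Phi> (p * w) = \<Phi> w" and a: "a \<noteq> 0"
    and lim: "\<Phi> \<midarrow>a\<rightarrow> c"
  shows "\<Phi> \<midarrow>(p powi k * a)\<rightarrow> c"
proof (rule tendsto_at_transfer[OF _ _ lim])
  have e: "p powi (- k) * (p powi k * a) = a"
    using p by (simp add: power_int_minus mult.assoc[symmetric])
  have "filterlim (\<lambda>w. p powi (- k) * w) (at (p powi (- k) * (p powi k * a))) (at (p powi k * a))"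
    using p by (intro filterlim_cmult_at) simp
  thus "filterlim (\<lambda>w. p powi (- k) * w) (at a) (at (p powi k * a))"
    unfolding e .
  have "p powi k * a \<noteq> 0" using p a by simp
  show "\<forall>\<^sub>F w in at (p powi k * a). \<Phi> (p powi (- k) * w) = \<Phi> w"
    using eventually_nonzero_at[OF \<open>p powi k * a \<noteq> 0\<close>]
    by eventually_elim (rule periodic_power_int[where E = \<Phi>, OF p per])
qed

lemma tendsto_at_inverse_point:
  fixes \<Phi> :: "complex \<Rightarrow> complex"
  assumes sym: "\<And>w. w \<noteq> 0 \<Longrightarrow> \<Phi> (1 / w) = \<Phi> w" and a: "a \<noteq> 0"
    and lim: "\<Phi> \<midarrow>a\<rightarrow> c"
  shows "\<Phi> \<midarrow>(1 / a)\<rightarrow> c"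
proof (rule tendsto_at_transfer[OF _ _ lim])
  show "filterlim (\<lambda>w. 1 / w) (at a) (at (1 / a))"
    using filterlim_inverse_at[of "1 / a"] a by simp
  have "1 / a \<noteq> 0" using a by simp
  show "\<forall>\<^sub>F w in at (1 / a). \<Phi> (1 / w) = \<Phi> w"
    using eventually_nonzero_at[OF \<open>1 / a \<noteq> 0\<close>] by eventually_elim (rule sym)
qed

lemma tendsto_quotient_at_simple_zero:
  assumes "H field_differentiable at z0" "H z0 = 0" "isCont Q z0" "Q z0 \<noteq> 0"
    and "\<forall>\<^sub>F w in at z0. D w = (w - z0) * Q w"
  shows "\<exists>c. ((\<lambda>w. H w / D w) \<longlongrightarrow> c) (at z0)"
proof -
  obtain H' where "(H has_field_derivative H') (at z0)"
    using assms(1) field_differentiable_def by blast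
  hence "((\<lambda>w. (H w - H z0) / (w - z0)) \<longlongrightarrow> H') (at z0)"
    by (simp add: has_field_derivative_iff)
  hence lim: "((\<lambda>w. (H w - H z0) / (w - z0) / Q w) \<longlongrightarrow> H' / Q z0) (at z0)"
    using assms(3,4) by (intro tendsto_divide) (auto simp: isCont_def)
  have "\<forall>\<^sub>F w in at z0. (H w - H z0) / (w - z0) / Q w = H w / D w"
    using assms(5) eventually_neq_at_within[of z0 z0 UNIV]
    by eventually_elim (simp add: assms(2))
  from Lim_transform_eventually[OF lim this] show ?thesis by blast
qed

text \<open>A \<open>p\<close>-invariant meromorphic function on \<open>\<complex>\<^sup>*\<close> with a limit at every point has only
  removable singularities; removing them gives a constant.\<close>
lemma p_invariant_with_limits_const:
  assumes p: "norm p < 1" "p \<noteq> 0" and mero: "\<Phi> meromorphic_on - {0}"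
    and per: "\<And>w. w \<noteq> 0 \<Longrightarrow> \<Phi> (p * w) = \<Phi> w"
    and lim: "\<And>w. w \<noteq> 0 \<Longrightarrow> \<exists>c. \<Phi> \<midarrow>w\<rightarrow> c"
  shows "\<exists>C. \<forall>w. w \<noteq> 0 \<longrightarrow> \<Phi> \<midarrow>w\<rightarrow> \<Phi> w \<longrightarrow> \<Phi> w = C"
proof -
  define E where "E = remove_sings \<Phi>"
  have "E analytic_on {w}" if w: "w \<noteq> 0" for w
  proof -
    have "isolated_singularity_at \<Phi> w"
      using meromorphic_on_subset[OF mero] w by (intro meromorphic_on_isolated_singularity) auto
    thus ?thesis
      using lim[OF w] remove_sings_analytic_at unfolding E_def by blast
  qed
  hence "E holomorphic_on - {0}"
    using analytic_on_analytic_at analytic_imp_holomorphic by blast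
  moreover have "E (p * w) = E w" if w: "w \<noteq> 0" for w
  proof -
    obtain c where c: "\<Phi> \<midarrow>w\<rightarrow> c" using lim[OF w] by blast
    hence "\<Phi> \<midarrow>(p powi 1 * w)\<rightarrow> c"
      using tendsto_at_power_int_shift[where \<Phi>=\<Phi> and p=p and a=w, OF p(2) per w] by blast
    thus ?thesis
      using c unfolding E_def by (simp add: remove_sings_eqI)
  qed
  ultimately obtain C where C: "\<And>w. w \<noteq> 0 \<Longrightarrow> E w = C"
    using holomorphic_p_invariant_const[OF p] by blast
  show ?thesis
  proof (intro exI allI impI)
    fix w assume "w \<noteq> 0" "\<Phi> \<midarrow>w\<rightarrow> \<Phi> w"
    thus "\<Phi> w = C"
      using C remove_sings_eqI unfolding E_def by metis
  qed
qed

text \<open>At \<open>1/x\<^sub>j\<close> the denominator has a simple zero, and \<open>H\<close> vanishes because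
  \<open>H(1/x\<^sub>j) = H(x\<^sub>j) = 0\<close>.\<close>
lemma sym_theta_quotient_limit_at_inverse_node:
  fixes x :: "nat \<Rightarrow> complex"
  assumes p: "norm p < 1" and V: "sym_theta_fun p n H"
    and j: "j \<in> {1..n}" and Hj: "H (x j) = 0" and xnz: "\<forall>i\<le>n. x i \<noteq> 0"
    and sq: "theta (x j ^ 2) p \<noteq> 0" and sep: "\<forall>i\<le>n. i \<noteq> j \<longrightarrow> theta_pm (x i) (x j) p \<noteq> 0"
  shows "\<exists>c. ((\<lambda>w. H w / (\<Prod>i\<in>{1..n}. theta_pm (x i) w p)) \<longlongrightarrow> c) (at (1 / x j))"
proof -
  define X where "X = x j"
  have X: "X \<noteq> 0" using xnz j unfolding X_def by auto
  define R where "R w = (\<Prod>i\<in>{1..n} - {j}. theta_pm (x i) w p)" for w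
  define Q where "Q w = - X * qpoch_inf (X * w * p) p * qpoch_inf (p / (X * w)) p * theta (X / w) p * R w" for w
  have hol: "H holomorphic_on - {0}" and sym: "H (1 / X) = H X"
    using V X unfolding sym_theta_fun_def by auto
  have "\<exists>c. ((\<lambda>w. H w / (\<Prod>i\<in>{1..n}. theta_pm (x i) w p)) \<longlongrightarrow> c) (at (1 / X))"
  proof (rule tendsto_quotient_at_simple_zero)
    show "H field_differentiable at (1 / X)"
      by (rule holomorphic_on_imp_differentiable_at[OF hol]) (use X in auto)
    show "H (1 / X) = 0"
      using sym Hj unfolding X_def by simp
    have "Q holomorphic_on - {0}"
      unfolding Q_def R_def using p X xnz j by (intro holomorphic_intros) auto
    thus "isCont Q (1 / X)"
      using X by (intro isCont_holomorphic_punctured) auto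
    have "R (1 / X) \<noteq> 0"
      using sep j unfolding R_def X_def by (auto simp: theta_pm_inverse)
    moreover have "theta (X * X) p \<noteq> 0"
      using sq unfolding X_def by (simp add: power2_eq_square)
    ultimately show "Q (1 / X) \<noteq> 0"
      unfolding Q_def using X qpoch_inf_p_nonzero[OF p] by simp
    have "(\<Prod>i\<in>{1..n}. theta_pm (x i) w p) = theta_pm X w p * R w" for w
      using j unfolding R_def X_def by (simp add: prod.remove)
    also have "theta_pm X w p * R w = (w - 1 / X) * Q w" for w
      unfolding theta_pm_factor[OF p X] Q_def by (simp add: mult_ac)
    finally have "(\<Prod>i\<in>{1..n}. theta_pm (x i) w p) = (w - 1 / X) * Q w" for w .
    thus "\<forall>\<^sub>F w in at (1 / X). (\<Prod>i\<in>{1..n}. theta_pm (x i) w p) = (w - 1 / X) * Q w"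
      by simp
  qed
  thus ?thesis unfolding X_def .
qed

text \<open>Every zero of the denominator is the image of some \<open>1/x\<^sub>j\<close> under a map
  \<open>w \<mapsto> p^k w^{\<plusminus>1}\<close>, which leaves the quotient invariant.\<close>
lemma sym_theta_quotient_limits:
  fixes x :: "nat \<Rightarrow> complex"
  assumes p: "norm p < 1" "p \<noteq> 0" and V: "sym_theta_fun p n H"
    and zero: "\<forall>j\<le>n. H (x j) = 0" and xnz: "\<forall>j\<le>n. x j \<noteq> 0"
    and sq: "\<forall>j\<le>n. theta (x j ^ 2) p \<noteq> 0"
    and sep: "\<forall>i\<le>n. \<forall>j\<le>n. i \<noteq> j \<longrightarrow> theta_pm (x i) (x j) p \<noteq> 0"
    and w: "w \<noteq> 0"
  shows "\<exists>c. ((\<lambda>v. H v / (\<Prod>i\<in>{1..n}. theta_pm (x i) v p)) \<longlongrightarrow> c) (at w)"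
proof -
  define D where "D v = (\<Prod>i\<in>{1..n}. theta_pm (x i) v p)" for v
  have VD: "sym_theta_fun p n D"
    using sym_theta_fun_prod_theta_pm[OF p, of "{1..n}" x] xnz unfolding D_def by auto
  have per: "\<And>v. v \<noteq> 0 \<Longrightarrow> H (p * v) / D (p * v) = H v / D v"
    and sym: "\<And>v. v \<noteq> 0 \<Longrightarrow> H (1 / v) / D (1 / v) = H v / D v"
    using sym_theta_fun_quotient_invariant[OF V VD p(2)] by auto
  have "\<exists>c. ((\<lambda>v. H v / D v) \<longlongrightarrow> c) (at w)"
  proof (cases "D w = 0")
    case False
    have "isCont H w" "isCont D w"
      using V VD w by (auto intro: isCont_holomorphic_punctured simp: sym_theta_fun_def)
    hence "((\<lambda>v. H v / D v) \<longlongrightarrow> H w / D w) (at w)"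
      using False by (intro tendsto_divide) (auto simp: isCont_def)
    thus ?thesis by blast
  next
    case True
    then obtain j where j: "j \<in> {1..n}" and tz: "theta_pm (x j) w p = 0"
      unfolding D_def by (auto simp: prod_zero_iff)
    have xj: "x j \<noteq> 0" "1 / x j \<noteq> 0" using xnz j by auto
    obtain c where c: "((\<lambda>v. H v / D v) \<longlongrightarrow> c) (at (1 / x j))"
      using sym_theta_quotient_limit_at_inverse_node[OF p(1) V j _ xnz] zero sq sep j
      unfolding D_def by auto
    have shifted: "((\<lambda>v. H v / D v) \<longlongrightarrow> c) (at (p powi k * (1 / x j)))" for k
      by (rule tendsto_at_power_int_shift[OF p(2) per xj(2) c])
    from theta_pm_eq_0_imp[OF p xj(1) w tz] show ?thesis
    proof cases
      case (1 k)
      thus ?thesis using shifted by blast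
    next
      case (2 k)
      have "p powi k * (1 / x j) \<noteq> 0" using p xj by simp
      from tendsto_at_inverse_point[OF sym this shifted] show ?thesis
        using 2 by blast
    qed
  qed
  thus ?thesis unfolding D_def .
qed

lemma sym_theta_fun_eq_0_if_vanishing:
  fixes x :: "nat \<Rightarrow> complex"
  assumes p: "norm p < 1" "p \<noteq> 0" and V: "sym_theta_fun p n H"
    and zero: "\<forall>j\<le>n. H (x j) = 0" and xnz: "\<forall>j\<le>n. x j \<noteq> 0"
    and sq: "\<forall>j\<le>n. theta (x j ^ 2) p \<noteq> 0"
    and sep: "\<forall>i\<le>n. \<forall>j\<le>n. i \<noteq> j \<longrightarrow> theta_pm (x i) (x j) p \<noteq> 0"
    and z: "z \<noteq> 0" and Dz: "(\<Prod>i\<in>{1..n}. theta_pm (x i) z p) \<noteq> 0"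
  shows "H z = 0"
proof -
  define D where "D v = (\<Prod>i\<in>{1..n}. theta_pm (x i) v p)" for v
  define \<Phi> where "\<Phi> v = H v / D v" for v
  have VD: "sym_theta_fun p n D"
    using sym_theta_fun_prod_theta_pm[OF p, of "{1..n}" x] xnz unfolding D_def by auto
  have holH: "H holomorphic_on - {0}" and holD: "D holomorphic_on - {0}"
    using V VD unfolding sym_theta_fun_def by auto
  have "open (- {0 :: complex})" by auto
  hence "\<Phi> meromorphic_on - {0}"
    unfolding \<Phi>_def using holH holD
    by (intro meromorphic_on_divide analytic_on_imp_meromorphic_on) (auto simp: analytic_on_open)
  moreover have "\<And>v. v \<noteq> 0 \<Longrightarrow> \<Phi> (p * v) = \<Phi> v"
    unfolding \<Phi>_def using sym_theta_fun_quotient_invariant[OF V VD p(2)] by auto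
  moreover have "\<And>v. v \<noteq> 0 \<Longrightarrow> \<exists>c. \<Phi> \<midarrow>v\<rightarrow> c"
    unfolding \<Phi>_def D_def by (rule sym_theta_quotient_limits[OF p V zero xnz sq sep])
  ultimately obtain C where C: "\<And>v. v \<noteq> 0 \<Longrightarrow> \<Phi> \<midarrow>v\<rightarrow> \<Phi> v \<Longrightarrow> \<Phi> v = C"
    using p_invariant_with_limits_const[OF p] by blast
  have cont: "\<Phi> \<midarrow>v\<rightarrow> \<Phi> v" if "v \<noteq> 0" "D v \<noteq> 0" for v
    unfolding \<Phi>_def using that holH holD
    by (intro tendsto_divide isCont_holomorphic_punctured[unfolded isCont_def]) auto
  have "D (x 0) \<noteq> 0"
    using sep unfolding D_def by auto
  hence "C = 0"
    using C[OF _ cont] xnz zero unfolding \<Phi>_def by force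
  thus ?thesis
    using C[OF z cont[OF z]] Dz unfolding \<Phi>_def D_def by simp
qed

lemma theta_pm_self:
  assumes "norm p < 1" "x \<noteq> 0"
  shows "theta_pm x x p = 0"
  unfolding theta_pm_def using assms theta_one by simp

lemma sym_theta_fun_interpolation:
  fixes x :: "nat \<Rightarrow> complex"
  assumes p: "norm p < 1" "p \<noteq> 0" and V: "sym_theta_fun p n G"
    and xnz: "\<forall>j\<le>n. x j \<noteq> 0" and sq: "\<forall>j\<le>n. theta (x j ^ 2) p \<noteq> 0"
    and sep: "\<forall>i\<le>n. \<forall>j\<le>n. i \<noteq> j \<longrightarrow> theta_pm (x i) (x j) p \<noteq> 0"
    and z: "z \<noteq> 0" and Dz: "(\<Prod>i\<in>{1..n}. theta_pm (x i) z p) \<noteq> 0"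
  shows "G z = (\<Sum>j\<le>n. G (x j) / (\<Prod>i\<in>{0..n} - {j}. theta_pm (x i) (x j) p)
                         * (\<Prod>i\<in>{0..n} - {j}. theta_pm (x i) z p))"
proof -
  define B where "B j w = (\<Prod>i\<in>{0..n} - {j}. theta_pm (x i) w p)" for j w
  define H where "H w = G w - (\<Sum>j\<le>n. G (x j) / B j (x j) * B j w)" for w
  have "sym_theta_fun p n (B j)" if "j \<le> n" for j
    using sym_theta_fun_prod_theta_pm[OF p, of "{0..n} - {j}" x] xnz that unfolding B_def by simp
  hence VH: "sym_theta_fun p n H"
    unfolding H_def by (intro sym_theta_fun_diff V sym_theta_fun_sum sym_theta_fun_cmult) auto
  have "H (x j) = 0" if j: "j \<le> n" for j
  proof -
    have "B k (x j) = 0" if "k \<le> n" "k \<noteq> j" for k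
      unfolding B_def using that j xnz theta_pm_self[OF p(1)] by (intro prod_zero) (auto intro!: bexI[of _ j])
    hence "(\<Sum>k\<le>n. G (x k) / B k (x k) * B k (x j)) = G (x j) / B j (x j) * B j (x j)"
      using j by (subst sum.remove[of _ j]) (auto intro: sum.neutral)
    moreover have "B j (x j) \<noteq> 0"
      unfolding B_def using sep j by auto
    ultimately show ?thesis
      unfolding H_def by simp
  qed
  hence "H z = 0"
    using sym_theta_fun_eq_0_if_vanishing[OF p VH _ xnz sq sep z Dz] by blast
  thus ?thesis
    unfolding H_def B_def by simp
qed

section \<open>Identities for theta shifted factorials\<close>

lemma tpoch_add: "tpoch x q p (k + l) = tpoch x q p k * tpoch (x * q ^ k) q p l"
  unfolding tpoch_def by (induction l) (simp_all add: power_add mult_ac)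

lemma tpoch_prefix_nonzero: "tpoch x q p n \<noteq> 0 \<Longrightarrow> k \<le> n \<Longrightarrow> tpoch x q p k \<noteq> 0"
  unfolding tpoch_def by (auto simp: prod_zero_iff)

lemma tpoch_mult_theta_pm: "tpoch (a * z) q p k * tpoch (a / z) q p k = (\<Prod>i<k. theta_pm (a * q ^ i) z p)"
  unfolding tpoch_def theta_pm_def prod.distrib[symmetric] by (simp add: mult_ac)

lemma tpoch_shifted_mult_theta_pm:
  "tpoch (a * q * z) q p k * tpoch (a * q / z) q p k = (\<Prod>i\<in>{1..k}. theta_pm (a * q ^ i) z p)"
  using tpoch_mult_theta_pm[of "a * q" z q p k] prod.atLeast1_atMost_eq[of "\<lambda>i. theta_pm (a * q ^ i) z p" k]
  by (simp add: mult_ac)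

lemma theta_reflect:
  assumes "norm p < 1" "x * y = 1"
  shows "theta x p = - theta y p / y"
proof -
  have y: "y \<noteq> 0" using assms(2) by auto
  hence "x = 1 / y" using assms(2) by (simp add: field_simps)
  thus ?thesis using theta_inverse[OF assms(1) y] by simp
qed

text \<open>The factors of the two sides pair off as \<open>\<theta>(u) = -\<theta>(1/u) u\<close>; what remains is
  the scalar identity \<open>u\<^sub>3 u\<^sub>4 = q u\<^sub>1 u\<^sub>2\<close>.\<close>
lemma theta_node_reflection:
  fixes a c q p :: complex
  assumes p: "norm p < 1" and q: "q \<noteq> 0" and a: "a \<noteq> 0" and c: "c \<noteq> 0"
    and j: "j = Suc (i + d)" and n: "n = j + e"
  shows "theta (c / (a * q ^ j) * q ^ d) p * theta (a * q powi (1 - int n) / c * q ^ i) p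
           * theta (q * q ^ e * q ^ d) p * theta (q * q ^ i) p
       = q * theta (q powi (- int n) * q ^ i) p * theta (a * q / c * q ^ i) p
           * theta (c / a * q ^ e * q ^ d) p * theta (a * q ^ d / (a * q ^ j)) p"
proof -
  define u1 where "u1 = a * q / c * q ^ i"
  define u2 where "u2 = c / a * q ^ e * q ^ d"
  define u3 where "u3 = q * q ^ e * q ^ d"
  define u4 where "u4 = q * q ^ i"
  have "1 - int n = - int (i + d + e)" using j n by simp
  hence qn: "q powi (1 - int n) = inverse (q ^ (i + d + e))"
    by (metis power_int_minus power_int_of_nat)
  have qn': "q powi (- int n) = inverse (q ^ Suc (i + d + e))"
    using j n by (simp only: power_int_minus power_int_of_nat) simp
  have "c / (a * q ^ j) * q ^ d * u1 = 1" "a * q powi (1 - int n) / c * q ^ i * u2 = 1"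
    "q powi (- int n) * q ^ i * u3 = 1" "a * q ^ d / (a * q ^ j) * u4 = 1"
    unfolding u1_def u2_def u3_def u4_def qn qn' j using a c q
    by (simp_all add: field_simps power_add power_int_minus)
  note refl = this[THEN theta_reflect[OF p]]
  have u: "u1 \<noteq> 0" "u2 \<noteq> 0" "u3 * u4 = q * (u1 * u2)"
    unfolding u1_def u2_def u3_def u4_def using a c q by (simp_all add: field_simps power_add)
  show ?thesis
    unfolding refl u1_def[symmetric] u2_def[symmetric] u3_def[symmetric] u4_def[symmetric]
    using u q by (simp add: field_simps)
qed

lemma prod_lessThan_rev: "(\<Prod>i<j. f i) = (\<Prod>i<j. f (j - Suc i))"
  using prod.atLeastLessThan_rev[of f 0 j] by (simp add: lessThan_atLeast0)

lemma tpoch_node_reflection_lessThan: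
  fixes a c q p :: complex
  assumes p: "norm p < 1" and q: "q \<noteq> 0" and a: "a \<noteq> 0" and c: "c \<noteq> 0" and jn: "j \<le> n"
  shows "tpoch (c / (a * q ^ j)) q p j * tpoch (a * q powi (1 - int n) / c) q p j
           * tpoch (q * q ^ (n - j)) q p j * tpoch q q p j
       = q ^ j * tpoch (q powi (- int n)) q p j * tpoch (a * q / c) q p j * tpoch (c / a * q ^ (n - j)) q p j
           * (\<Prod>i<j. theta (a * q ^ i / (a * q ^ j)) p)"
proof -
  have "tpoch (c / (a * q ^ j)) q p j * tpoch (a * q powi (1 - int n) / c) q p j
          * tpoch (q * q ^ (n - j)) q p j * tpoch q q p j
      = (\<Prod>i<j. theta (c / (a * q ^ j) * q ^ (j - Suc i)) p * theta (a * q powi (1 - int n) / c * q ^ i) p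
           * theta (q * q ^ (n - j) * q ^ (j - Suc i)) p * theta (q * q ^ i) p)"
    unfolding tpoch_def prod.distrib
    by (subst (1 3) prod_lessThan_rev) (rule refl)
  also have "\<dots> = (\<Prod>i<j. q * theta (q powi (- int n) * q ^ i) p * theta (a * q / c * q ^ i) p
           * theta (c / a * q ^ (n - j) * q ^ (j - Suc i)) p * theta (a * q ^ (j - Suc i) / (a * q ^ j)) p)"
    using jn by (intro prod.cong refl theta_node_reflection[OF p q a c]) auto
  also have "\<dots> = q ^ j * tpoch (q powi (- int n)) q p j * tpoch (a * q / c) q p j
           * tpoch (c / a * q ^ (n - j)) q p j * (\<Prod>i<j. theta (a * q ^ i / (a * q ^ j)) p)"
    unfolding tpoch_def prod.distrib
    by (subst (3 4) prod_lessThan_rev) simp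
  finally show ?thesis .
qed

lemma tpoch_swap_add: "tpoch x q p k * tpoch (x * q ^ k) q p l = tpoch x q p l * tpoch (x * q ^ l) q p k"
  by (metis tpoch_add add.commute)

lemma tpoch_node_square:
  fixes a q p :: complex
  assumes "j \<le> n"
  shows "theta (a ^ 2) p * tpoch (a ^ 2 * q) q p n * tpoch (a ^ 2 * q ^ (n + 1)) q p j
       = theta (a ^ 2 * q ^ (2 * j)) p * tpoch (a ^ 2) q p j * (\<Prod>i\<in>{0..n} - {j}. theta (a * q ^ i * (a * q ^ j)) p)"
proof -
  have sq: "a * q ^ i * (a * q ^ j) = a ^ 2 * q ^ j * q ^ i" for i
    by (simp add: power2_eq_square mult_ac)
  have "(\<Prod>i\<in>{0..n}. theta (a * q ^ i * (a * q ^ j)) p) = tpoch (a ^ 2 * q ^ j) q p (Suc n)"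
    unfolding tpoch_def sq by (simp add: atLeast0AtMost lessThan_Suc_atMost)
  moreover have "(\<Prod>i\<in>{0..n}. theta (a * q ^ i * (a * q ^ j)) p)
      = theta (a * q ^ j * (a * q ^ j)) p * (\<Prod>i\<in>{0..n} - {j}. theta (a * q ^ i * (a * q ^ j)) p)"
    using assms by (intro prod.remove) auto
  moreover have "q ^ (2 * j) = q ^ j * q ^ j"
    by (simp add: mult_2 power_add)
  hence "a * q ^ j * (a * q ^ j) = a ^ 2 * q ^ (2 * j)"
    by (simp add: power2_eq_square mult_ac)
  moreover have "tpoch (a ^ 2) q p (Suc n) = theta (a ^ 2) p * tpoch (a ^ 2 * q) q p n"
    using tpoch_add[of "a ^ 2" q p 1 n] by (simp add: tpoch_def)
  ultimately show ?thesis
    using tpoch_swap_add[of "a ^ 2" q p "Suc n" j] by (simp add: mult_ac)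
qed

lemma tpoch_node_ratio:
  fixes a c q p :: complex
  assumes p: "norm p < 1" and q: "q \<noteq> 0" and a: "a \<noteq> 0" and c: "c \<noteq> 0" and jn: "j \<le> n"
  shows "tpoch (c / (a * q ^ j)) q p n * tpoch (a * q powi (1 - int n) / c) q p j * tpoch q q p n * tpoch q q p j
       = q ^ j * tpoch (q powi (- int n)) q p j * tpoch (a * q / c) q p j * tpoch (c / a) q p n
         * (\<Prod>i\<in>{0..n} - {j}. theta (a * q ^ i / (a * q ^ j)) p)"
proof -
  define m where "m = n - j"
  have nm: "n = j + m" "n = m + j" unfolding m_def using jn by auto
  have e1: "tpoch (c / (a * q ^ j)) q p n = tpoch (c / (a * q ^ j)) q p j * tpoch (c / a) q p m"
    using tpoch_add[of "c / (a * q ^ j)" q p j m] q nm(1) by simp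
  have e2: "tpoch q q p n = tpoch q q p m * tpoch (q * q ^ m) q p j"
    using tpoch_add[of q q p m j] nm(2) by simp
  have e3: "tpoch (c / a) q p n = tpoch (c / a) q p m * tpoch (c / a * q ^ m) q p j"
    using tpoch_add[of "c / a" q p m j] nm(2) by simp
  have U: "{0..n} - {j} = {..<j} \<union> {Suc j..n}" using jn by auto
  have "(\<Prod>i\<in>{0..n} - {j}. theta (a * q ^ i / (a * q ^ j)) p)
      = (\<Prod>i<j. theta (a * q ^ i / (a * q ^ j)) p) * (\<Prod>i\<in>{Suc j..n}. theta (a * q ^ i / (a * q ^ j)) p)"
    unfolding U by (rule prod.union_disjoint) auto
  also have "(\<Prod>i\<in>{Suc j..n}. theta (a * q ^ i / (a * q ^ j)) p) = (\<Prod>l<m. theta (q * q ^ l) p)"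
    using prod.atLeastLessThan_shift_0[of "\<lambda>i. theta (a * q ^ i / (a * q ^ j)) p" "Suc j" "Suc n"] a q
    by (simp add: atLeastLessThanSuc_atLeastAtMost lessThan_atLeast0 m_def o_def power_add)
  finally have e4: "(\<Prod>i\<in>{0..n} - {j}. theta (a * q ^ i / (a * q ^ j)) p)
      = (\<Prod>i<j. theta (a * q ^ i / (a * q ^ j)) p) * tpoch q q p m"
    unfolding tpoch_def .
  show ?thesis
    unfolding e1 e2 e3 e4
    using tpoch_node_reflection_lessThan[OF p q a c jn] unfolding m_def[symmetric] by (simp add: mult_ac)
qed

section \<open>The one-variable interpolation formula\<close>

definition vwp_prefactor :: "complex \<Rightarrow> complex \<Rightarrow> complex \<Rightarrow> complex \<Rightarrow> complex \<Rightarrow> nat \<Rightarrow> complex" where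
  "vwp_prefactor q p a c z n = (tpoch (a ^ 2 * q) q p n * tpoch q q p n
                    * tpoch (c * z) q p n * tpoch (c / z) q p n)
                 / (tpoch (a * c) q p n * tpoch (c / a) q p n
                    * tpoch (a * q * z) q p n * tpoch (a * q / z) q p n)"

definition vwp_coeff :: "complex \<Rightarrow> complex \<Rightarrow> complex \<Rightarrow> complex \<Rightarrow> nat \<Rightarrow> nat \<Rightarrow> complex" where
  "vwp_coeff q p a c n k = q ^ k * theta (a ^ 2 * q ^ (2 * k)) p / theta (a ^ 2) p
               * (tpoch (q powi (- int n)) q p k * tpoch (a ^ 2) q p k
                  * tpoch (a * q / c) q p k * tpoch (a * c * q ^ n) q p k)
               / (tpoch q q p k * tpoch (a ^ 2 * q ^ (n + 1)) q p k
                  * tpoch (a * c) q p k * tpoch (a * q powi (1 - int n) / c) q p k)"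

definition vwp_weight :: "complex \<Rightarrow> complex \<Rightarrow> complex \<Rightarrow> complex \<Rightarrow> complex \<Rightarrow> nat \<Rightarrow> nat \<Rightarrow> complex" where
  "vwp_weight q p a c z n k = q ^ k * theta (a ^ 2 * q ^ (2 * k)) p / theta (a ^ 2) p
               * (tpoch (q powi (- int n)) q p k * tpoch (a ^ 2) q p k
                  * tpoch (a * q / c) q p k * tpoch (a * c * q ^ n) q p k
                  * tpoch (a * z) q p k * tpoch (a / z) q p k)
               / (tpoch q q p k * tpoch (a ^ 2 * q ^ (n + 1)) q p k
                  * tpoch (a * c) q p k * tpoch (a * q powi (1 - int n) / c) q p k
                  * tpoch (a * q * z) q p k * tpoch (a * q / z) q p k)"

lemma vwp_weight_eq_coeff:
  "vwp_weight q p a c z n k = vwp_coeff q p a c n k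
     * (tpoch (a * z) q p k * tpoch (a / z) q p k) / (tpoch (a * q * z) q p k * tpoch (a * q / z) q p k)"
  unfolding vwp_weight_def vwp_coeff_def by (simp add: field_simps)

text \<open>The Lagrange basis element for the node \<open>a q\<^sup>j\<close>, evaluated at that node: this is where the
  very-well-poised coefficients come from.\<close>
lemma vwp_coeff_at_node:
  fixes a c q p :: complex
  assumes p: "norm p < 1" and q: "q \<noteq> 0" and a: "a \<noteq> 0" and c: "c \<noteq> 0" and j: "j \<le> n"
    and nz: "theta (a ^ 2) p \<noteq> 0" "tpoch (a * c) q p n \<noteq> 0" "tpoch (c / a) q p n \<noteq> 0"
      "tpoch q q p j \<noteq> 0" "tpoch (a ^ 2 * q ^ (n + 1)) q p j \<noteq> 0" "tpoch (a * c) q p j \<noteq> 0"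
      "tpoch (a * q powi (1 - int n) / c) q p j \<noteq> 0"
  shows "vwp_coeff q p a c n j * (\<Prod>i\<in>{0..n} - {j}. theta_pm (a * q ^ i) (a * q ^ j) p)
       = tpoch (a ^ 2 * q) q p n * tpoch q q p n / (tpoch (a * c) q p n * tpoch (c / a) q p n)
         * (tpoch (c * (a * q ^ j)) q p n * tpoch (c / (a * q ^ j)) q p n)"
proof -
  have B: "(\<Prod>i\<in>{0..n} - {j}. theta_pm (a * q ^ i) (a * q ^ j) p)
      = (\<Prod>i\<in>{0..n} - {j}. theta (a * q ^ i * (a * q ^ j)) p) * (\<Prod>i\<in>{0..n} - {j}. theta (a * q ^ i / (a * q ^ j)) p)"
    unfolding theta_pm_def by (rule prod.distrib)
  have S2: "tpoch (c * (a * q ^ j)) q p n * tpoch (a * c) q p j = tpoch (a * c * q ^ n) q p j * tpoch (a * c) q p n"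
    using tpoch_swap_add[of "a * c" q p j n] by (simp add: mult_ac)
  have "(theta (a ^ 2 * q ^ (2 * j)) p * tpoch (a ^ 2) q p j * (\<Prod>i\<in>{0..n} - {j}. theta (a * q ^ i * (a * q ^ j)) p))
      * (tpoch (a * c * q ^ n) q p j * tpoch (a * c) q p n)
      * (q ^ j * tpoch (q powi (- int n)) q p j * tpoch (a * q / c) q p j * tpoch (c / a) q p n
         * (\<Prod>i\<in>{0..n} - {j}. theta (a * q ^ i / (a * q ^ j)) p))
    = (theta (a ^ 2) p * tpoch (a ^ 2 * q) q p n * tpoch (a ^ 2 * q ^ (n + 1)) q p j)
      * (tpoch (c * (a * q ^ j)) q p n * tpoch (a * c) q p j)
      * (tpoch (c / (a * q ^ j)) q p n * tpoch (a * q powi (1 - int n) / c) q p j * tpoch q q p n * tpoch q q p j)"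
    unfolding tpoch_node_square[OF j] S2 tpoch_node_ratio[OF p q a c j] ..
  thus ?thesis
    unfolding vwp_coeff_def B using nz by (simp add: field_simps)
qed

lemma geometric_nodes_separated:
  fixes a q p :: complex
  assumes p: "norm p < 1" and q: "q \<noteq> 0" and a: "a \<noteq> 0"
    and generic: "\<forall>s\<le>2 * n. theta (a ^ 2 * q ^ s) p \<noteq> 0" and qn: "tpoch q q p n \<noteq> 0"
    and ij: "i \<le> n" "j \<le> n" "i \<noteq> j"
  shows "theta_pm (a * q ^ i) (a * q ^ j) p \<noteq> 0"
proof -
  have q_pow: "theta (q ^ s) p \<noteq> 0" if "1 \<le> s" "s \<le> n" for s
  proof -
    have "theta (q * q ^ (s - 1)) p \<noteq> 0"
      using qn that unfolding tpoch_def by (auto simp: prod_zero_iff)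
    thus ?thesis using that by (simp add: power_eq_if)
  qed
  have "a * q ^ i * (a * q ^ j) = a ^ 2 * q ^ (i + j)"
    by (simp add: power_add power2_eq_square mult_ac)
  hence "theta (a * q ^ i * (a * q ^ j)) p \<noteq> 0"
    using generic[rule_format, of "i + j"] ij by simp
  moreover have "theta (a * q ^ i / (a * q ^ j)) p \<noteq> 0"
  proof (cases "i < j")
    case True
    hence "a * q ^ i / (a * q ^ j) = 1 / q ^ (j - i)"
      using a q by (simp add: power_diff)
    thus ?thesis
      using theta_inverse[OF p, of "q ^ (j - i)"] q_pow[of "j - i"] True ij q by simp
  next
    case False
    hence "a * q ^ i / (a * q ^ j) = q ^ (i - j)"
      using a q ij by (simp add: power_diff)
    thus ?thesis
      using q_pow[of "i - j"] False ij by simp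
  qed
  ultimately show ?thesis
    unfolding theta_pm_def by simp
qed

lemma tpoch_ratio_eq_theta_pm_ratio:
  assumes k: "k \<le> n" and E: "tpoch (a * q * z) q p n * tpoch (a * q / z) q p n \<noteq> 0"
  shows "(tpoch (a * z) q p k * tpoch (a / z) q p k) / (tpoch (a * q * z) q p k * tpoch (a * q / z) q p k)
       = (\<Prod>i\<in>{0..n} - {k}. theta_pm (a * q ^ i) z p) / (tpoch (a * q * z) q p n * tpoch (a * q / z) q p n)"
proof -
  define R where "R = (\<Prod>i\<in>{Suc k..n}. theta_pm (a * q ^ i) z p)"
  have U: "{1..n} = {1..k} \<union> {Suc k..n}" "{0..n} - {k} = {..<k} \<union> {Suc k..n}"
    using k by auto
  have En: "tpoch (a * q * z) q p n * tpoch (a * q / z) q p n = (\<Prod>i\<in>{1..k}. theta_pm (a * q ^ i) z p) * R"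
    unfolding tpoch_shifted_mult_theta_pm R_def U(1) by (rule prod.union_disjoint) auto
  moreover have "(\<Prod>i\<in>{0..n} - {k}. theta_pm (a * q ^ i) z p) = (\<Prod>i<k. theta_pm (a * q ^ i) z p) * R"
    unfolding R_def U(2) by (rule prod.union_disjoint) auto
  moreover have "R \<noteq> 0" using E En by auto
  ultimately show ?thesis
    unfolding tpoch_shifted_mult_theta_pm[of a q z p k] tpoch_mult_theta_pm[of a z q p k] by simp
qed

text \<open>The conditions on \<open>a\<close> under which both sides of the interpolation formula are defined;
  each one is the non-vanishing of a function continuous in \<open>a \<noteq> 0\<close>.\<close>
definition vwp_nondegenerate :: "complex \<Rightarrow> complex \<Rightarrow> complex \<Rightarrow> complex \<Rightarrow> complex \<Rightarrow> nat \<Rightarrow> bool" where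
  "vwp_nondegenerate q p a c z n \<longleftrightarrow> a \<noteq> 0 \<and> theta (a ^ 2) p \<noteq> 0
     \<and> tpoch (a * c) q p n \<noteq> 0 \<and> tpoch (c / a) q p n \<noteq> 0
     \<and> tpoch (a * q * z) q p n \<noteq> 0 \<and> tpoch (a * q / z) q p n \<noteq> 0
     \<and> tpoch (a ^ 2 * q ^ (n + 1)) q p n \<noteq> 0 \<and> tpoch (a * q powi (1 - int n) / c) q p n \<noteq> 0
     \<and> (\<forall>j\<le>n. tpoch (c * (a * q ^ j)) q p n * tpoch (c / (a * q ^ j)) q p n \<noteq> 0)"

lemma sym_theta_fun_interpolation_geometric:
  fixes a q p :: complex
  assumes p: "norm p < 1" "p \<noteq> 0" and q: "q \<noteq> 0" and a: "a \<noteq> 0" and V: "sym_theta_fun p n G"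
    and generic: "\<forall>s\<le>2 * n. theta (a ^ 2 * q ^ s) p \<noteq> 0" and qn: "tpoch q q p n \<noteq> 0"
    and z: "z \<noteq> 0" and E: "tpoch (a * q * z) q p n * tpoch (a * q / z) q p n \<noteq> 0"
  shows "G z = (\<Sum>j\<le>n. G (a * q ^ j) / (\<Prod>i\<in>{0..n} - {j}. theta_pm (a * q ^ i) (a * q ^ j) p)
                         * (\<Prod>i\<in>{0..n} - {j}. theta_pm (a * q ^ i) z p))"
proof (rule sym_theta_fun_interpolation[OF p V, where x = "\<lambda>i. a * q ^ i"])
  have "(a * q ^ j) ^ 2 = a ^ 2 * q ^ (2 * j)" for j
    by (simp add: power_mult_distrib power_even_eq)
  thus "\<forall>j\<le>n. theta ((a * q ^ j) ^ 2) p \<noteq> 0"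
    using generic by simp
  show "\<forall>i\<le>n. \<forall>j\<le>n. i \<noteq> j \<longrightarrow> theta_pm (a * q ^ i) (a * q ^ j) p \<noteq> 0"
    using geometric_nodes_separated[OF p(1) q a generic qn] by blast
  show "(\<Prod>i\<in>{1..n}. theta_pm (a * q ^ i) z p) \<noteq> 0"
    using E unfolding tpoch_shifted_mult_theta_pm .
qed (use a q z in auto)

lemma vwp_interpolation_generic:
  fixes a c z q p :: complex and G :: "complex \<Rightarrow> complex"
  assumes p: "norm p < 1" "p \<noteq> 0" and q: "q \<noteq> 0" and c: "c \<noteq> 0" and z: "z \<noteq> 0"
    and V: "sym_theta_fun p n G"
    and qn: "tpoch q q p n \<noteq> 0" and Dz: "tpoch (c * z) q p n * tpoch (c / z) q p n \<noteq> 0"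
    and nd: "vwp_nondegenerate q p a c z n"
    and generic: "\<forall>s\<le>2 * n. theta (a ^ 2 * q ^ s) p \<noteq> 0"
  shows "vwp_prefactor q p a c z n * (G z / (tpoch (c * z) q p n * tpoch (c / z) q p n))
       = (\<Sum>k\<le>n. vwp_weight q p a c z n k
                   * (G (a * q ^ k) / (tpoch (c * (a * q ^ k)) q p n * tpoch (c / (a * q ^ k)) q p n)))"
proof -
  define x where "x i = a * q ^ i" for i
  define P where "P = tpoch (a ^ 2 * q) q p n * tpoch q q p n / (tpoch (a * c) q p n * tpoch (c / a) q p n)"
  define Dc where "Dc w = tpoch (c * w) q p n * tpoch (c / w) q p n" for w
  define E where "E = tpoch (a * q * z) q p n * tpoch (a * q / z) q p n"
  define B where "B j w = (\<Prod>i\<in>{0..n} - {j}. theta_pm (x i) w p)" for j w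
  have a: "a \<noteq> 0" and E: "E \<noteq> 0" and Dx: "\<And>j. j \<le> n \<Longrightarrow> Dc (x j) \<noteq> 0"
    using nd unfolding vwp_nondegenerate_def E_def Dc_def x_def by auto
  have interpolation: "G z = (\<Sum>j\<le>n. G (x j) / B j (x j) * B j z)"
    unfolding B_def x_def using sym_theta_fun_interpolation_geometric[OF p q a V generic qn z] E E_def by simp
  have node: "vwp_coeff q p a c n j * (G (x j) / Dc (x j)) = P * (G (x j) / B j (x j))" if j: "j \<le> n" for j
  proof -
    have "vwp_coeff q p a c n j * B j (x j) = P * Dc (x j)"
      unfolding B_def P_def Dc_def x_def using nd qn
      by (intro vwp_coeff_at_node[OF p(1) q a c j] tpoch_prefix_nonzero[OF _ j]) (auto simp: vwp_nondegenerate_def)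
    moreover have "B j (x j) \<noteq> 0"
      unfolding B_def x_def using geometric_nodes_separated[OF p(1) q a generic qn _ j] by auto
    ultimately show ?thesis
      using Dx[OF j] by (simp add: field_simps)
  qed
  have weight: "vwp_weight q p a c z n k = vwp_coeff q p a c n k * B k z / E" if "k \<le> n" for k
    unfolding vwp_weight_eq_coeff B_def x_def E_def
    using tpoch_ratio_eq_theta_pm_ratio[OF that E[unfolded E_def]] by (simp only: times_divide_eq_right[symmetric])
  have summand: "vwp_weight q p a c z n k * (G (x k) / Dc (x k)) = P / E * (G (x k) / B k (x k) * B k z)"
    if k: "k \<le> n" for k
  proof -
    have "vwp_weight q p a c z n k * (G (x k) / Dc (x k)) = vwp_coeff q p a c n k * (G (x k) / Dc (x k)) * B k z / E"
      unfolding weight[OF k] by (simp add: mult_ac)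
    also have "\<dots> = P * (G (x k) / B k (x k)) * B k z / E"
      unfolding node[OF k] ..
    finally show ?thesis by (simp add: mult_ac)
  qed
  have "(\<Sum>k\<le>n. vwp_weight q p a c z n k * (G (x k) / Dc (x k)))
      = (\<Sum>k\<le>n. P / E * (G (x k) / B k (x k) * B k z))"
    using summand by (intro sum.cong) auto
  also have "\<dots> = P / E * G z"
    unfolding interpolation by (simp add: sum_distrib_left)
  also have "\<dots> = vwp_prefactor q p a c z n * (G z / Dc z)"
    unfolding vwp_prefactor_def P_def E_def Dc_def using Dz by (simp add: field_simps)
  finally show ?thesis
    unfolding x_def Dc_def by simp
qed

lemma tendsto_tpoch [tendsto_intros]:
  assumes "norm p < 1" "q \<noteq> 0" "(f \<longlongrightarrow> l) F" "l \<noteq> 0"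
  shows "((\<lambda>x. tpoch (f x) q p n) \<longlongrightarrow> tpoch l q p n) F"
  unfolding tpoch_def using assms by (intro tendsto_intros) auto

lemma vwp_nondegenerate_eventually:
  assumes p: "norm p < 1" and q: "q \<noteq> 0" and c: "c \<noteq> 0" and z: "z \<noteq> 0"
    and nd: "vwp_nondegenerate q p a0 c z n"
  shows "\<forall>\<^sub>F a in at a0. vwp_nondegenerate q p a c z n"
proof -
  have a0: "a0 \<noteq> 0" using nd unfolding vwp_nondegenerate_def by simp
  have id: "((\<lambda>a. a) \<longlongrightarrow> a0) (at a0)" by (rule tendsto_ident_at)
  note ev = tendsto_imp_eventually_ne[where c' = 0]
  note h = nd[unfolded vwp_nondegenerate_def]
  have "\<forall>\<^sub>F a in at a0. a \<noteq> 0"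
    using ev[OF id a0] .
  moreover have "\<forall>\<^sub>F a in at a0. theta (a ^ 2) p \<noteq> 0"
    using h by (intro ev[of _ "theta (a0 ^ 2) p"]) (use a0 p in \<open>intro tendsto_intros id, auto\<close>)
  moreover have "\<forall>\<^sub>F a in at a0. tpoch (a * c) q p n \<noteq> 0"
    using h by (intro ev[of _ "tpoch (a0 * c) q p n"]) (use a0 p q c in \<open>intro tendsto_intros id, auto\<close>)
  moreover have "\<forall>\<^sub>F a in at a0. tpoch (c / a) q p n \<noteq> 0"
    using h by (intro ev[of _ "tpoch (c / a0) q p n"]) (use a0 p q c in \<open>intro tendsto_intros id, auto\<close>)
  moreover have "\<forall>\<^sub>F a in at a0. tpoch (a * q * z) q p n \<noteq> 0"
    using h by (intro ev[of _ "tpoch (a0 * q * z) q p n"]) (use a0 p q z in \<open>intro tendsto_intros id, auto\<close>)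
  moreover have "\<forall>\<^sub>F a in at a0. tpoch (a * q / z) q p n \<noteq> 0"
    using h by (intro ev[of _ "tpoch (a0 * q / z) q p n"]) (use a0 p q z in \<open>intro tendsto_intros id, auto\<close>)
  moreover have "\<forall>\<^sub>F a in at a0. tpoch (a ^ 2 * q ^ (n + 1)) q p n \<noteq> 0"
    using h by (intro ev[of _ "tpoch (a0 ^ 2 * q ^ (n + 1)) q p n"]) (use a0 p q in \<open>intro tendsto_intros id, auto\<close>)
  moreover have "\<forall>\<^sub>F a in at a0. tpoch (a * q powi (1 - int n) / c) q p n \<noteq> 0"
    using h by (intro ev[of _ "tpoch (a0 * q powi (1 - int n) / c) q p n"]) (use a0 p q c in \<open>intro tendsto_intros id, auto\<close>)
  moreover have "\<forall>\<^sub>F a in at a0. \<forall>j\<in>{..n}. tpoch (c * (a * q ^ j)) q p n * tpoch (c / (a * q ^ j)) q p n \<noteq> 0"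
  proof (intro eventually_ball_finite ballI finite_atMost)
    fix j assume "j \<in> {..n}"
    thus "\<forall>\<^sub>F a in at a0. tpoch (c * (a * q ^ j)) q p n * tpoch (c / (a * q ^ j)) q p n \<noteq> 0"
      using h by (intro ev[of _ "tpoch (c * (a0 * q ^ j)) q p n * tpoch (c / (a0 * q ^ j)) q p n"])
        (use a0 p q c in \<open>intro tendsto_intros id, auto\<close>)
  qed
  ultimately show ?thesis
    unfolding vwp_nondegenerate_def by eventually_elim auto
qed

lemma countable_theta_zero_parameters:
  fixes p q :: complex
  assumes p: "norm p < 1" "p \<noteq> 0" and q: "q \<noteq> 0"
  shows "countable {a. a \<noteq> 0 \<and> (\<exists>s\<le>N. theta (a ^ 2 * q ^ s) p = 0)}"
proof -
  define S where "S st = {a::complex. a ^ 2 = p powi (snd st) / q ^ (fst st)}" for st :: "nat \<times> int"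
  have "finite (S st)" for st
  proof -
    define w where "w = p powi (snd st) / q ^ (fst st)"
    have "S st \<subseteq> {csqrt w, - csqrt w}"
      unfolding S_def w_def[symmetric] using power2_eq_iff[of _ "csqrt w"] by auto
    thus ?thesis by (rule finite_subset) auto
  qed
  hence "countable (\<Union>st. S st)"
    by (intro countable_UN) (auto intro: countable_finite)
  moreover have "{a. a \<noteq> 0 \<and> (\<exists>s\<le>N. theta (a ^ 2 * q ^ s) p = 0)} \<subseteq> (\<Union>st. S st)"
  proof
    fix a assume "a \<in> {a. a \<noteq> 0 \<and> (\<exists>s\<le>N. theta (a ^ 2 * q ^ s) p = 0)}"
    then obtain s where a: "a \<noteq> 0" and s: "theta (a ^ 2 * q ^ s) p = 0" by auto
    then obtain k where "a ^ 2 * q ^ s = p powi k"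
      using theta_eq_0_imp[OF p _ s] q by auto
    hence "a \<in> S (s, k)"
      unfolding S_def using q by (simp add: field_simps)
    thus "a \<in> (\<Union>st. S st)" by blast
  qed
  ultimately show ?thesis by (rule countable_subset[rotated])
qed

text \<open>Punctured discs in \<open>\<complex>\<close> are uncountable.\<close>
lemma eq_at_point_if_eventually_eq_off_countable:
  fixes f g :: "complex \<Rightarrow> complex"
  assumes "(f \<longlongrightarrow> f x) (at x)" "(g \<longlongrightarrow> g x) (at x)" "countable B"
    and "\<forall>\<^sub>F a in at x. a \<notin> B \<longrightarrow> f a = g a"
  shows "f x = g x"
proof (rule ccontr)
  assume "f x \<noteq> g x"
  hence "\<forall>\<^sub>F a in at x. f a - g a \<noteq> 0"
    by (intro tendsto_imp_eventually_ne[OF tendsto_diff[OF assms(1,2)]]) simp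
  with assms(4) have "\<forall>\<^sub>F a in at x. a \<in> B"
    by eventually_elim auto
  then obtain d where d: "d > 0" and inB: "\<And>a. a \<noteq> x \<Longrightarrow> dist a x < d \<Longrightarrow> a \<in> B"
    unfolding eventually_at by blast
  have "ball x d \<subseteq> B \<union> {x}"
  proof
    fix a assume "a \<in> ball x d"
    thus "a \<in> B \<union> {x}"
      using inB[of a] by (cases "a = x") (auto simp: dist_commute)
  qed
  moreover have "countable (B \<union> {x})"
    using assms(3) by simp
  ultimately have "countable (ball x d)"
    by (rule countable_subset)
  thus False
    using uncountable_ball[OF d] by blast
qed

lemma tendsto_vwp_sum:
  fixes a c z q p :: complex and G :: "complex \<Rightarrow> complex"
  assumes p: "norm p < 1" and q: "q \<noteq> 0" and c: "c \<noteq> 0" and z: "z \<noteq> 0"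
    and V: "sym_theta_fun p n G" and qn: "tpoch q q p n \<noteq> 0" and nd: "vwp_nondegenerate q p a c z n"
  shows "((\<lambda>b. \<Sum>k\<le>n. vwp_weight q p b c z n k
                   * (G (b * q ^ k) / (tpoch (c * (b * q ^ k)) q p n * tpoch (c / (b * q ^ k)) q p n)))
         \<longlongrightarrow> (\<Sum>k\<le>n. vwp_weight q p a c z n k
                   * (G (a * q ^ k) / (tpoch (c * (a * q ^ k)) q p n * tpoch (c / (a * q ^ k)) q p n)))) (at a)"
proof -
  have h: "a \<noteq> 0" "theta (a ^ 2) p \<noteq> 0"
    "\<forall>j\<le>n. tpoch (c * (a * q ^ j)) q p n * tpoch (c / (a * q ^ j)) q p n \<noteq> 0"
    using nd unfolding vwp_nondegenerate_def by auto
  have hk: "tpoch q q p k \<noteq> 0" "tpoch (a ^ 2 * q ^ (n + 1)) q p k \<noteq> 0" "tpoch (a * c) q p k \<noteq> 0"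
    "tpoch (a * q powi (1 - int n) / c) q p k \<noteq> 0" "tpoch (a * q * z) q p k \<noteq> 0" "tpoch (a * q / z) q p k \<noteq> 0"
    if "k \<le> n" for k
    using tpoch_prefix_nonzero[OF _ that] nd qn unfolding vwp_nondegenerate_def by blast+
  have G: "((\<lambda>b. G (b * q ^ k)) \<longlongrightarrow> G (a * q ^ k)) (at a)" for k
  proof -
    have "isCont G (a * q ^ k)"
      using V h(1) q by (intro isCont_holomorphic_punctured) (auto simp: sym_theta_fun_def)
    moreover have "((\<lambda>b. b * q ^ k) \<longlongrightarrow> a * q ^ k) (at a)"
      by (intro tendsto_intros)
    ultimately show ?thesis
      by (rule isCont_tendsto_compose)
  qed
  show ?thesis
    unfolding vwp_weight_def using p q c z h hk
    by (intro tendsto_intros tendsto_ident_at G) auto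
qed

lemma vwp_interpolation:
  fixes a c z q p :: complex and G :: "complex \<Rightarrow> complex"
  assumes p: "norm p < 1" "p \<noteq> 0" and q: "q \<noteq> 0" and c: "c \<noteq> 0" and z: "z \<noteq> 0"
    and V: "sym_theta_fun p n G"
    and qn: "tpoch q q p n \<noteq> 0" and Dz: "tpoch (c * z) q p n * tpoch (c / z) q p n \<noteq> 0"
    and nd: "vwp_nondegenerate q p a c z n"
  shows "vwp_prefactor q p a c z n * (G z / (tpoch (c * z) q p n * tpoch (c / z) q p n))
       = (\<Sum>k\<le>n. vwp_weight q p a c z n k
                   * (G (a * q ^ k) / (tpoch (c * (a * q ^ k)) q p n * tpoch (c / (a * q ^ k)) q p n)))"
proof -
  define L where "L b = vwp_prefactor q p b c z n * (G z / (tpoch (c * z) q p n * tpoch (c / z) q p n))" for b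
  define R where "R b = (\<Sum>k\<le>n. vwp_weight q p b c z n k
                   * (G (b * q ^ k) / (tpoch (c * (b * q ^ k)) q p n * tpoch (c / (b * q ^ k)) q p n)))" for b
  define Bad where "Bad = {b. b \<noteq> 0 \<and> (\<exists>s\<le>2 * n. theta (b ^ 2 * q ^ s) p = 0)}"
  have "L a = R a"
  proof (rule eq_at_point_if_eventually_eq_off_countable[where f = L and g = R and x = a and B = Bad])
    show "(L \<longlongrightarrow> L a) (at a)"
      unfolding L_def vwp_prefactor_def using p q c z nd Dz
      by (intro tendsto_intros tendsto_ident_at) (auto simp: vwp_nondegenerate_def)
    show "(R \<longlongrightarrow> R a) (at a)"
      unfolding R_def by (rule tendsto_vwp_sum[OF p(1) q c z V qn nd])
    show "countable Bad"
      unfolding Bad_def by (rule countable_theta_zero_parameters[OF p q])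
    show "\<forall>\<^sub>F b in at a. b \<notin> Bad \<longrightarrow> L b = R b"
      using vwp_nondegenerate_eventually[OF p(1) q c z nd]
    proof eventually_elim
      case (elim b)
      thus ?case
        unfolding L_def R_def Bad_def
        using vwp_interpolation_generic[OF p q c z V qn Dz elim]
        unfolding vwp_nondegenerate_def by auto
    qed
  qed
  thus ?thesis
    unfolding L_def R_def .
qed

section \<open>Several variables\<close>

lemma prod_mult_eq_sum_PiE_coordinatewise:
  fixes L :: "nat \<Rightarrow> 'b :: comm_semiring_1" and W :: "nat \<Rightarrow> nat \<Rightarrow> 'b"
    and f :: "(nat \<Rightarrow> 'a) \<Rightarrow> 'b" and x :: "nat \<Rightarrow> nat \<Rightarrow> 'a"
  assumes step: "\<And>j y. j < m \<Longrightarrow> \<forall>i<m. y i \<in> S i \<Longrightarrow> y j = z j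
                   \<Longrightarrow> L j * f y = (\<Sum>k\<in>K j. W j k * f (y(j := x j k)))"
    and z: "\<forall>i<m. z i \<in> S i" and x: "\<And>i k. i < m \<Longrightarrow> k \<in> K i \<Longrightarrow> x i k \<in> S i"
  shows "(\<Prod>j<m. L j) * f z
       = (\<Sum>k\<in>PiE {..<m} K. (\<Prod>j<m. W j (k j)) * f (\<lambda>i. if i < m then x i (k i) else z i))"
proof -
  define pt where "pt j k = (\<lambda>i. if i < j then x i (k i) else z i)" for j and k :: "nat \<Rightarrow> nat"
  have "(\<Prod>i<j. L i) * f z = (\<Sum>k\<in>PiE {..<j} K. (\<Prod>i<j. W i (k i)) * f (pt j k))" if "j \<le> m" for j
    using that
  proof (induction j)
    case 0
    have "pt 0 k = z" for k unfolding pt_def by auto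
    thus ?case by simp
  next
    case (Suc j)
    have IH: "(\<Prod>i<j. L i) * f z = (\<Sum>k\<in>PiE {..<j} K. (\<Prod>i<j. W i (k i)) * f (pt j k))"
      using Suc by simp
    have one_step: "L j * f (pt j k) = (\<Sum>l\<in>K j. W j l * f (pt (Suc j) (k(j := l))))"
      if k: "k \<in> PiE {..<j} K" for k
    proof -
      have "\<forall>i<m. pt j k i \<in> S i"
        unfolding pt_def using k z x Suc.prems by (auto simp: PiE_iff)
      moreover have "(pt j k)(j := x j l) = pt (Suc j) (k(j := l))" for l
        unfolding pt_def by auto
      ultimately show ?thesis
        using step[of j "pt j k"] Suc.prems by (simp add: pt_def)
    qed
    have "(\<Prod>i<Suc j. L i) * f z = L j * ((\<Prod>i<j. L i) * f z)"
      by (simp add: mult_ac)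
    also have "\<dots> = (\<Sum>k\<in>PiE {..<j} K. (\<Prod>i<j. W i (k i)) * (L j * f (pt j k)))"
      unfolding IH by (simp add: sum_distrib_left mult_ac)
    also have "\<dots> = (\<Sum>k\<in>PiE {..<j} K. \<Sum>l\<in>K j. (\<Prod>i<Suc j. W i ((k(j := l)) i)) * f (pt (Suc j) (k(j := l))))"
      by (intro sum.cong refl) (simp add: one_step sum_distrib_left mult_ac)
    also have "\<dots> = (\<Sum>(l, k)\<in>K j \<times> PiE {..<j} K. (\<Prod>i<Suc j. W i ((k(j := l)) i)) * f (pt (Suc j) (k(j := l))))"
      by (subst sum.swap) (rule sum.cartesian_product)
    also have "\<dots> = (\<Sum>k\<in>PiE (insert j {..<j}) K. (\<Prod>i<Suc j. W i (k i)) * f (pt (Suc j) k))"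
      unfolding PiE_insert_eq by (subst sum.reindex[OF inj_combinator]) (auto simp: case_prod_beta)
    also have "insert j {..<j} = {..<Suc j}" by auto
    finally show ?case .
  qed
  thus ?thesis unfolding pt_def by simp
qed

lemma Wspace_cong:
  assumes "f \<in> Wspace m q p c n" "\<forall>i<m. z i = z' i"
  shows "f z = f z'"
  using assms(1)
proof (induction f rule: Wspace.induct)
  case (gen k g)
  have "g z = g z'"
    using gen(2) assms(2) unfolding Wgen_def by blast
  moreover have "(\<Prod>i<m. tpoch (c i * z i) q p (k i) * tpoch (c i / z i) q p (k i))
      = (\<Prod>i<m. tpoch (c i * z' i) q p (k i) * tpoch (c i / z' i) q p (k i))"
    using assms(2) by (intro prod.cong) auto
  ultimately show ?case by simp
qed auto

lemma power_int_quasi_period_cancel: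
  fixes p w :: complex
  assumes "p \<noteq> 0" "w \<noteq> 0"
  shows "p powi (- int k) * w powi (- 2 * int k) * (p * w ^ 2) ^ k = 1"
proof -
  have "w powi (- 2 * int k) = inverse (w ^ (2 * k))"
    by (metis mult_minus_left of_nat_mult of_nat_numeral power_int_minus power_int_of_nat)
  thus ?thesis
    using assms by (simp add: power_int_minus power_mult_distrib power_mult power2_eq_square field_simps)
qed

lemma sym_theta_fun_Wgen_slice:
  assumes W: "Wgen m p k g" and j: "j < m" and y: "\<forall>i<m. y i \<noteq> 0" and p: "p \<noteq> 0"
  shows "sym_theta_fun p (k j) (\<lambda>w. g (y(j := w)))"
  unfolding sym_theta_fun_def
proof (intro conjI allI impI)
  show "(\<lambda>w. g (y(j := w))) holomorphic_on - {0}"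
    using W y j unfolding Wgen_def by blast
  fix w :: complex assume w: "w \<noteq> 0"
  have W': "\<And>z. \<forall>i<m. z i \<noteq> 0 \<Longrightarrow> \<forall>i<m. (\<lambda>w. g (z(i := w))) holomorphic_on (- {0})
      \<and> g (z(i := 1 / z i)) = g z \<and> g (z(i := p * z i)) = p powi (- int (k i)) * z i powi (- 2 * int (k i)) * g z"
    using W unfolding Wgen_def by blast
  have "\<forall>i<m. (y(j := w)) i \<noteq> 0" using y w by auto
  note X = W'[OF this, rule_format, OF j]
  hence "g ((y(j := w))(j := 1 / w)) = g (y(j := w))"
    and per: "g ((y(j := w))(j := p * w)) = p powi (- int (k j)) * w powi (- 2 * int (k j)) * g (y(j := w))"
    by auto
  thus "g (y(j := 1 / w)) = g (y(j := w))" by simp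
  have "g (y(j := p * w)) * (p * w\<^sup>2) ^ k j
      = (p powi (- int (k j)) * w powi (- 2 * int (k j)) * (p * w\<^sup>2) ^ k j) * g (y(j := w))"
    using per by (simp add: mult_ac)
  thus "g (y(j := p * w)) * (p * w\<^sup>2) ^ k j = g (y(j := w))"
    unfolding power_int_quasi_period_cancel[OF p w] by simp
qed

text \<open>Numerator and denominator of a generator are completed by the missing factors
  \<open>(c_j q^{k_j} w, c_j q^{k_j}/w; q,p)_{n_j - k_j}\<close>.\<close>
lemma Wspace_generator_slice:
  fixes c y :: "nat \<Rightarrow> complex"
  assumes p: "norm p < 1" "p \<noteq> 0" and q: "q \<noteq> 0" and cj: "c j \<noteq> 0" and j: "j < m"
    and y: "\<forall>i<m. y i \<noteq> 0" and W: "Wgen m p k g" and kn: "k j \<le> n j"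
  shows "\<exists>G. sym_theta_fun p (n j) G \<and> (\<forall>w. w \<noteq> 0 \<longrightarrow> tpoch (c j * w) q p (n j) * tpoch (c j / w) q p (n j) \<noteq> 0
            \<longrightarrow> g (y(j := w)) / (\<Prod>i<m. tpoch (c i * (y(j := w)) i) q p (k i) * tpoch (c i / (y(j := w)) i) q p (k i))
               = G w / (tpoch (c j * w) q p (n j) * tpoch (c j / w) q p (n j)))"
proof -
  define Rst where "Rst = (\<Prod>i\<in>{..<m} - {j}. tpoch (c i * y i) q p (k i) * tpoch (c i / y i) q p (k i))"
  define S where "S w = (\<Prod>i<n j - k j. theta_pm (c j * q ^ k j * q ^ i) w p)" for w
  define G where "G w = g (y(j := w)) * S w / Rst" for w
  have "sym_theta_fun p (k j + (n j - k j)) (\<lambda>w. g (y(j := w)) * S w)"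
    using sym_theta_fun_prod_theta_pm[OF p, of "{..<n j - k j}" "\<lambda>i. c j * q ^ k j * q ^ i"] cj q
    unfolding S_def by (intro sym_theta_fun_mult sym_theta_fun_Wgen_slice[OF W j y p(2)]) simp_all
  hence "sym_theta_fun p (n j) G"
    unfolding G_def using kn sym_theta_fun_cmult[of p "n j" _ "1 / Rst"] by simp
  moreover have "g (y(j := w)) / (\<Prod>i<m. tpoch (c i * (y(j := w)) i) q p (k i) * tpoch (c i / (y(j := w)) i) q p (k i))
      = G w / (tpoch (c j * w) q p (n j) * tpoch (c j / w) q p (n j))"
    if D: "tpoch (c j * w) q p (n j) * tpoch (c j / w) q p (n j) \<noteq> 0" for w
  proof -
    define Kw where "Kw = tpoch (c j * w) q p (k j) * tpoch (c j / w) q p (k j)"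
    have "tpoch (c j * w) q p (n j) * tpoch (c j / w) q p (n j) = Kw * S w"
      using tpoch_add[of "c j * w" q p "k j" "n j - k j"] tpoch_add[of "c j / w" q p "k j" "n j - k j"] kn
        tpoch_mult_theta_pm[of "c j * q ^ k j" w q p "n j - k j"]
      unfolding Kw_def S_def by (simp add: mult_ac)
    moreover have "(\<Prod>i<m. tpoch (c i * (y(j := w)) i) q p (k i) * tpoch (c i / (y(j := w)) i) q p (k i)) = Kw * Rst"
      using j unfolding Kw_def Rst_def by (subst prod.remove[of _ j]) auto
    ultimately show ?thesis
      using D unfolding G_def by (cases "Rst = 0") (auto simp: field_simps)
  qed
  ultimately show ?thesis by blast
qed

lemma Wspace_slice:
  fixes c y :: "nat \<Rightarrow> complex"
  assumes p: "norm p < 1" "p \<noteq> 0" and q: "q \<noteq> 0" and cj: "c j \<noteq> 0" and j: "j < m"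
    and y: "\<forall>i<m. y i \<noteq> 0" and f: "f \<in> Wspace m q p c n"
  shows "\<exists>G. sym_theta_fun p (n j) G \<and> (\<forall>w. w \<noteq> 0 \<longrightarrow> tpoch (c j * w) q p (n j) * tpoch (c j / w) q p (n j) \<noteq> 0
            \<longrightarrow> f (y(j := w)) = G w / (tpoch (c j * w) q p (n j) * tpoch (c j / w) q p (n j)))"
  using f
proof (induction f rule: Wspace.induct)
  case (gen k g)
  hence "k j \<le> n j" using j by simp
  from Wspace_generator_slice[where c = c and y = y and k = k and n = n and j = j, OF p q cj j y gen(2) this] show ?case .
next
  case zero
  show ?case
    using sym_theta_fun_zero by auto
next
  case (add f h)
  then obtain F H where FH: "sym_theta_fun p (n j) F" "sym_theta_fun p (n j) H"
    and F: "\<And>w. w \<noteq> 0 \<Longrightarrow> tpoch (c j * w) q p (n j) * tpoch (c j / w) q p (n j) \<noteq> 0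
            \<Longrightarrow> f (y(j := w)) = F w / (tpoch (c j * w) q p (n j) * tpoch (c j / w) q p (n j))"
    and H: "\<And>w. w \<noteq> 0 \<Longrightarrow> tpoch (c j * w) q p (n j) * tpoch (c j / w) q p (n j) \<noteq> 0
            \<Longrightarrow> h (y(j := w)) = H w / (tpoch (c j * w) q p (n j) * tpoch (c j / w) q p (n j))"
    by blast
  show ?case
  proof (intro exI[of _ "\<lambda>w. F w + H w"] conjI sym_theta_fun_add FH allI impI)
    fix w :: complex assume "w \<noteq> 0" "tpoch (c j * w) q p (n j) * tpoch (c j / w) q p (n j) \<noteq> 0"
    thus "f (y(j := w)) + h (y(j := w)) = (F w + H w) / (tpoch (c j * w) q p (n j) * tpoch (c j / w) q p (n j))"
      using F H by (simp add: add_divide_distrib)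
  qed
next
  case (smult f s)
  then obtain F where FS: "sym_theta_fun p (n j) F"
    and F: "\<And>w. w \<noteq> 0 \<Longrightarrow> tpoch (c j * w) q p (n j) * tpoch (c j / w) q p (n j) \<noteq> 0
            \<Longrightarrow> f (y(j := w)) = F w / (tpoch (c j * w) q p (n j) * tpoch (c j / w) q p (n j))"
    by blast
  show ?case
  proof (intro exI[of _ "\<lambda>w. s * F w"] conjI sym_theta_fun_cmult FS allI impI)
    fix w :: complex assume "w \<noteq> 0" "tpoch (c j * w) q p (n j) * tpoch (c j / w) q p (n j) \<noteq> 0"
    thus "s * f (y(j := w)) = s * F w / (tpoch (c j * w) q p (n j) * tpoch (c j / w) q p (n j))"
      using F by simp
  qed
qed

lemma Wspace_vwp_expansion:
  fixes a c y :: "nat \<Rightarrow> complex"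
  assumes p: "norm p < 1" "p \<noteq> 0" and q: "q \<noteq> 0" and cj: "c j \<noteq> 0" and j: "j < m"
    and y: "\<forall>i<m. y i \<noteq> 0" and f: "f \<in> Wspace m q p c n"
    and qn: "tpoch q q p (n j) \<noteq> 0" and Dy: "tpoch (c j * y j) q p (n j) * tpoch (c j / y j) q p (n j) \<noteq> 0"
    and nd: "vwp_nondegenerate q p (a j) (c j) (y j) (n j)"
  shows "vwp_prefactor q p (a j) (c j) (y j) (n j) * f y
       = (\<Sum>k\<le>n j. vwp_weight q p (a j) (c j) (y j) (n j) k * f (y(j := a j * q ^ k)))"
proof -
  obtain G where V: "sym_theta_fun p (n j) G"
    and G: "\<And>w. w \<noteq> 0 \<Longrightarrow> tpoch (c j * w) q p (n j) * tpoch (c j / w) q p (n j) \<noteq> 0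
              \<Longrightarrow> f (y(j := w)) = G w / (tpoch (c j * w) q p (n j) * tpoch (c j / w) q p (n j))"
    using Wspace_slice[OF p q cj j y f] by blast
  have "f y = G (y j) / (tpoch (c j * y j) q p (n j) * tpoch (c j / y j) q p (n j))"
    using G[of "y j"] y j Dy by simp
  moreover have "f (y(j := a j * q ^ k))
      = G (a j * q ^ k) / (tpoch (c j * (a j * q ^ k)) q p (n j) * tpoch (c j / (a j * q ^ k)) q p (n j))"
    if "k \<le> n j" for k
    using nd q that by (intro G) (auto simp: vwp_nondegenerate_def)
  ultimately show ?thesis
    using vwp_interpolation[OF p q cj _ V qn Dy nd] y j by simp
qed

theorem theorem2p12:
  fixes m :: nat and n :: "nat \<Rightarrow> nat" and c a z :: "nat \<Rightarrow> complex"
    and q p :: complex and f :: "(nat \<Rightarrow> complex) \<Rightarrow> complex"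
  assumes "m \<ge> 1"
    and "0 < norm q" and "norm q < 1" and "norm p < 1" and "p \<noteq> 0"
    and "f \<in> Wspace m q p c n"
    and "\<forall>i<m. a i \<noteq> 0 \<and> c i \<noteq> 0 \<and> z i \<noteq> 0"
    and "\<forall>i<m. theta (a i ^ 2) p \<noteq> 0"
    and "\<forall>i<m. tpoch (a i * c i) q p (n i) \<noteq> 0 \<and> tpoch (c i / a i) q p (n i) \<noteq> 0 \<and>
                tpoch (a i * q * z i) q p (n i) \<noteq> 0 \<and> tpoch (a i * q / z i) q p (n i) \<noteq> 0"
    and "\<forall>i<m. \<forall>k\<le>n i. tpoch q q p k \<noteq> 0 \<and> tpoch (a i ^ 2 * q ^ (n i + 1)) q p k \<noteq> 0 \<and>
                tpoch (a i * c i) q p k \<noteq> 0 \<and> tpoch (a i * q powi (1 - int (n i)) / c i) q p k \<noteq> 0 \<and>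
                tpoch (a i * q * z i) q p k \<noteq> 0 \<and> tpoch (a i * q / z i) q p k \<noteq> 0"
    and "\<forall>i<m. tpoch (c i * z i) q p (n i) \<noteq> 0 \<and> tpoch (c i / z i) q p (n i) \<noteq> 0 \<and>
                (\<forall>j\<le>n i. tpoch (c i * (a i * q ^ j)) q p (n i) \<noteq> 0 \<and>
                           tpoch (c i / (a i * q ^ j)) q p (n i) \<noteq> 0)"
  shows "(\<Prod>i<m. (tpoch (a i ^ 2 * q) q p (n i) * tpoch q q p (n i)
                    * tpoch (c i * z i) q p (n i) * tpoch (c i / z i) q p (n i))
                 / (tpoch (a i * c i) q p (n i) * tpoch (c i / a i) q p (n i)
                    * tpoch (a i * q * z i) q p (n i) * tpoch (a i * q / z i) q p (n i))) * f z
       = (\<Sum>k\<in>PiE {..<m} (\<lambda>i. {..n i}).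
            (\<Prod>i<m. q ^ k i * theta (a i ^ 2 * q ^ (2 * k i)) p / theta (a i ^ 2) p
               * (tpoch (q powi (- int (n i))) q p (k i) * tpoch (a i ^ 2) q p (k i)
                  * tpoch (a i * q / c i) q p (k i) * tpoch (a i * c i * q ^ n i) q p (k i)
                  * tpoch (a i * z i) q p (k i) * tpoch (a i / z i) q p (k i))
               / (tpoch q q p (k i) * tpoch (a i ^ 2 * q ^ (n i + 1)) q p (k i)
                  * tpoch (a i * c i) q p (k i) * tpoch (a i * q powi (1 - int (n i)) / c i) q p (k i)
                  * tpoch (a i * q * z i) q p (k i) * tpoch (a i * q / z i) q p (k i)))
            * f (\<lambda>i. a i * q ^ k i))"
proof -
  have p: "norm p < 1" "p \<noteq> 0" and q: "q \<noteq> 0" and f: "f \<in> Wspace m q p c n"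
    using assms(2,4-6) by auto
  have nz: "a i \<noteq> 0" "c i \<noteq> 0" "z i \<noteq> 0" "tpoch q q p (n i) \<noteq> 0"
    "tpoch (c i * z i) q p (n i) * tpoch (c i / z i) q p (n i) \<noteq> 0"
    "vwp_nondegenerate q p (a i) (c i) (z i) (n i)" if "i < m" for i
    using assms(7-11) that unfolding vwp_nondegenerate_def by auto
  have outside_coords: "f (\<lambda>i. if i < m then a i * q ^ k i else z i) = f (\<lambda>i. a i * q ^ k i)" for k
    by (rule Wspace_cong[OF f]) simp
  have "(\<Prod>i<m. vwp_prefactor q p (a i) (c i) (z i) (n i)) * f z
      = (\<Sum>k\<in>PiE {..<m} (\<lambda>i. {..n i}). (\<Prod>i<m. vwp_weight q p (a i) (c i) (z i) (n i) (k i))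
           * f (\<lambda>i. if i < m then a i * q ^ k i else z i))"
  proof (rule prod_mult_eq_sum_PiE_coordinatewise[where S = "\<lambda>_. - {0}"])
    fix j y assume "j < m" "\<forall>i<m. y i \<in> - {0}" "y j = z j"
    thus "vwp_prefactor q p (a j) (c j) (z j) (n j) * f y
        = (\<Sum>k\<le>n j. vwp_weight q p (a j) (c j) (z j) (n j) k * f (y(j := a j * q ^ k)))"
      using Wspace_vwp_expansion[OF p q _ _ _ f, of j y a] nz by simp
  qed (use nz q in auto)
  thus ?thesis
    unfolding outside_coords vwp_prefactor_def vwp_weight_def .
qed

end
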